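(* Let $\{Y_i\}_{i\in\mathbb{Z}}$ be a strictly stationary homogeneous real-valued Markov process with transition probability function $P(\cdot;\cdot)$ and stationary distribution $\nu$, and let $X_i=H(Y_i)$ for a Borel function $H:\mathbb{R}\to\mathbb{R}$. Suppose there is a $\sigma$-finite measure $\mu$ with $\nu\ll\mu$ and $P(x;\cdot)\ll\mu$ for all $x$; write $f_0$ for the density of $\nu$ and $f_1(x,\cdot)$ for the density of $P(x;\cdot)$ with respect to $\mu$. Let $A=H^{-1}((-\infty,\xi_p])$ and suppose there exist Borel sets $A_1\subset A$, $A_2\subset A^c$ with $\mu(A_1)>0$, $\mu(A_2)>0$ such that $f_0(x)>0$ and $f_1(x,y)>0$ for all $x,y\in A_1\cup A_2$. Then, with $\mathcal C_0=\sigma(Y_i:i\ne0)$ and $G_0(\xi_p)=P(X_0\le\xi_p\mid\mathcal C_0)$, we have $P(G_0(\xi_p)=1)<p$; consequently, by stationarity, condition (C.5) holds with $\mathcal D_j=\sigma(Y_j)$ and $\mathcal C_j=\sigma(Y_i:i\ne j)$.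
   Context: $F$ is the distribution function of $X_1$, $p\in(0,1)$, $\xi_p=\inf\{x:F(x)\ge p\}$, and $F(\xi_p)=p$. Condition (C.5): there exist $d\in(0,1)$ and sub-$\sigma$-fields $\mathcal C_i$ with $\sigma(\mathcal D_j:j\ne i)\cup\sigma(X_j:j\ne i)\subset\mathcal C_i$ and $P(G_i(\xi_p)=1)\le p-d$ for all $i\in\mathbb{Z}$, where $G_i(y)=P(X_i\le y\mid\mathcal C_i)$. *)

theory Defs
  imports "HOL-Probability.Probability"
begin

definition gen_sigma :: "'a measure \<Rightarrow> (int \<Rightarrow> 'a \<Rightarrow> real) \<Rightarrow> int set \<Rightarrow> 'a measure" where
  "gen_sigma M Y I = sigma (space M) {Y i -` B \<inter> space M | i B. i \<in> I \<and> B \<in> sets borel}"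

definition strictly_stationary :: "'a measure \<Rightarrow> (int \<Rightarrow> 'a \<Rightarrow> real) \<Rightarrow> bool" where
  "strictly_stationary M Y \<longleftrightarrow>
     (\<forall>J k. finite J \<longrightarrow>
        distr M (PiM J (\<lambda>_. borel)) (\<lambda>\<omega>. \<lambda>j\<in>J. Y (j + k) \<omega>)
      = distr M (PiM J (\<lambda>_. borel)) (\<lambda>\<omega>. \<lambda>j\<in>J. Y j \<omega>))"

definition homogeneous_markov :: "'a measure \<Rightarrow> (int \<Rightarrow> 'a \<Rightarrow> real) \<Rightarrow> (real \<Rightarrow> real measure) \<Rightarrow> bool" where
  "homogeneous_markov M Y P \<longleftrightarrow>
     (\<forall>x. prob_space (P x) \<and> sets (P x) = sets borel) \<and>
     (\<forall>B\<in>sets borel. (\<lambda>x. measure (P x) B) \<in> borel_measurable borel) \<and>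
     (\<forall>i. \<forall>B\<in>sets borel.
        AE \<omega> in M. real_cond_exp M (gen_sigma M Y {..i})
                      (indicator {\<omega>\<in>space M. Y (i + 1) \<omega> \<in> B}) \<omega>
                    = measure (P (Y i \<omega>)) B)"

definition Gcond :: "'a measure \<Rightarrow> (int \<Rightarrow> 'a \<Rightarrow> real) \<Rightarrow> (int \<Rightarrow> 'a measure) \<Rightarrow> int \<Rightarrow> real \<Rightarrow> 'a \<Rightarrow> real" where
  "Gcond M X C i y = real_cond_exp M (C i) (indicator {\<omega>\<in>space M. X i \<omega> \<le> y})"

definition cond_C5 :: "'a measure \<Rightarrow> (int \<Rightarrow> 'a \<Rightarrow> real) \<Rightarrow> (int \<Rightarrow> 'a measure) \<Rightarrow> (int \<Rightarrow> 'a measure)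
     \<Rightarrow> real \<Rightarrow> real \<Rightarrow> bool" where
  "cond_C5 M X D C p \<xi> \<longleftrightarrow>
     (\<exists>d. 0 < d \<and> d < 1 \<and>
        (\<forall>i. subalgebra M (C i) \<and>
             sets (sigma (space M)
                     ((\<Union>j\<in>-{i}. sets (D j)) \<union>
                      {X j -` B \<inter> space M | j B. j \<noteq> i \<and> B \<in> sets borel}))
               \<subseteq> sets (C i) \<and>
             measure M {\<omega>\<in>space M. Gcond M X C i \<xi> \<omega> = 1} \<le> p - d))"

end

theory Submission
  imports Defs
begin

text \<open>
  Let \<open>B = {Y\<^sub>0 \<in> A}\<close> with \<open>A = H\<^sup>-\<^sup>1(]-\<infinity>,\<xi>])\<close> and \<open>S = {P(B | Y\<^sub>j, j \<noteq> 0) = 1}\<close>.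
  Then \<open>S \<subseteq> B\<close> up to a null set, so \<open>P(S) < p\<close> follows once we exhibit a subset of \<open>B\<close> of
  positive probability that is disjoint from \<open>S\<close> up to a null set.  Such a set is
  \<open>T = {Y\<^sub>-\<^sub>1, Y\<^sub>1 \<in> A\<^sub>1 \<union> A\<^sub>2}\<close> intersected with \<open>{Y\<^sub>-\<^sub>1, Y\<^sub>0, Y\<^sub>1 \<in> A\<^sub>1}\<close>:

  \<^item> By the Markov property (in its two-sided form) \<open>P(S | Y\<^sub>-\<^sub>1,Y\<^sub>0,Y\<^sub>1) = P(S | Y\<^sub>-\<^sub>1,Y\<^sub>1) =: \<phi>\<close>.
    Hence \<open>\<phi> = 0\<close> a.s. on \<open>T - B\<close>, i.e. the event \<open>D = {\<phi> > 0} \<inter> T\<close>, which is a function of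
    \<open>(Y\<^sub>-\<^sub>1, Y\<^sub>1)\<close>, lies in \<open>B\<close> up to a null set.
  \<^item> Writing the law of \<open>(Y\<^sub>-\<^sub>1,Y\<^sub>0,Y\<^sub>1)\<close> with the transition densities and using \<open>f\<^sub>1 > 0\<close> on
    \<open>A\<^sub>1 \<union> A\<^sub>2\<close> together with \<open>\<mu>(A\<^sub>2) > 0\<close>, such an event must be null; so \<open>P(S \<inter> T) = 0\<close>.
  \<^item> Positivity of \<open>f\<^sub>0\<close> and \<open>f\<^sub>1\<close> on \<open>A\<^sub>1\<close> with \<open>\<mu>(A\<^sub>1) > 0\<close> gives \<open>P(Y\<^sub>-\<^sub>1,Y\<^sub>0,Y\<^sub>1 \<in> A\<^sub>1) > 0\<close>.

  By stationarity all bounds hold uniformly in the time index, which yields (C.5).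
\<close>

section \<open>Conditional expectations of indicators\<close>

context prob_space
begin

lemma integrable_real_indicator [simp, intro]:
  "A \<in> sets M \<Longrightarrow> integrable M (indicator A :: 'a \<Rightarrow> real)"
  by (simp add: integrable_indicator_iff emeasure_eq_measure)

lemma cond_exp_indicator_swap:
  assumes N: "sigma_finite_subalgebra M N" and A: "A \<in> sets M" and Q: "Q \<in> sets M"
  shows "(\<integral>x. indicator A x * real_cond_exp M N (indicator Q) x \<partial>M)
       = (\<integral>x. real_cond_exp M N (indicator A) x * indicator Q x \<partial>M)"
proof -
  interpret N: sigma_finite_subalgebra M N by (rule N)
  let ?EA = "real_cond_exp M N (indicator A)" and ?EQ = "real_cond_exp M N (indicator Q)"
  have int_QA: "integrable M (\<lambda>x. ?EQ x * indicator A x)"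
    using integrable_mult_indicator[OF A N.real_cond_exp_int(1)[OF integrable_real_indicator[OF Q]]]
    by (simp add: mult.commute)
  have int_AQ: "integrable M (\<lambda>x. ?EA x * indicator Q x)"
    using integrable_mult_indicator[OF Q N.real_cond_exp_int(1)[OF integrable_real_indicator[OF A]]]
    by (simp add: mult.commute)
  have "(\<integral>x. indicator A x * ?EQ x \<partial>M) = (\<integral>x. ?EQ x * ?EA x \<partial>M)"
    using N.real_cond_exp_intg(2)[OF int_QA] A by (simp add: mult.commute)
  also have "\<dots> = (\<integral>x. ?EA x * indicator Q x \<partial>M)"
    using N.real_cond_exp_intg(2)[OF int_AQ] Q by (simp add: mult.commute)
  finally show ?thesis .
qed

lemma cond_prob_one_null_outside:
  assumes N: "sigma_finite_subalgebra M N" and B: "B \<in> sets M"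
  defines "S \<equiv> {x\<in>space M. real_cond_exp M N (indicator B) x = 1}"
  shows "S \<in> sets N" "measure M (S - B) = 0"
proof -
  interpret N: sigma_finite_subalgebra M N by (rule N)
  let ?G = "real_cond_exp M N (indicator B)"
  have space_N: "space N = space M" using N.subalg by (simp add: subalgebra_def)
  have "{x\<in>space N. ?G x = 1} \<in> sets N" by measurable
  then show SN: "S \<in> sets N" unfolding S_def space_N .
  then have SM: "S \<in> sets M" using N.subalg by (auto simp: subalgebra_def)
  have "(\<integral>x. indicator S x * ?G x \<partial>M) = (\<integral>x. indicator S x * indicator B x \<partial>M)"
    using SN SM B by (intro N.real_cond_exp_intg(2)) (auto intro!: integrable_real_mult_indicator)
  moreover have "(\<integral>x. indicator S x * ?G x \<partial>M) = (\<integral>x. indicator S x \<partial>M)"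
    by (rule Bochner_Integration.integral_cong) (auto simp: S_def split: split_indicator)
  ultimately have "measure M S = measure M (S \<inter> B)"
    using SM B by (simp add: indicator_inter_arith[symmetric])
  then show "measure M (S - B) = 0" using finite_measure_Diff'[OF SM B] by simp
qed

lemma emeasure_density_integral:
  fixes g :: "'a \<Rightarrow> real"
  assumes "integrable M g" "AE x in M. 0 \<le> g x" "Q \<in> sets M"
  shows "emeasure (density M (\<lambda>x. ennreal (g x))) Q = ennreal (\<integral>x. g x * indicator Q x \<partial>M)"
proof -
  have gm[measurable]: "g \<in> borel_measurable M" using assms by auto
  have "emeasure (density M (\<lambda>x. ennreal (g x))) Q = (\<integral>\<^sup>+x. ennreal (g x) * indicator Q x \<partial>M)"
    using assms by (intro emeasure_density) auto
  also have "\<dots> = (\<integral>\<^sup>+x. ennreal (g x * indicator Q x) \<partial>M)"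
    by (intro nn_integral_cong) (auto split: split_indicator)
  also have "\<dots> = ennreal (\<integral>x. g x * indicator Q x \<partial>M)"
    using assms by (intro nn_integral_eq_integral)
      (auto simp: mult.commute intro!: integrable_mult_indicator[OF assms(3) assms(1), simplified]
        split: split_indicator)
  finally show ?thesis .
qed

end

lemma finite_measures_agree_on_generated:
  assumes N1: "finite_measure N1" and N2: "finite_measure N2" and sets_eq: "sets N1 = sets N2"
    and G: "Int_stable G" "G \<subseteq> sets N1" "space N1 \<in> G"
    and agree: "\<And>X. X \<in> G \<Longrightarrow> emeasure N1 X = emeasure N2 X"
    and Q: "Q \<in> sigma_sets (space N1) G"
  shows "emeasure N1 Q = emeasure N2 Q"
proof -
  have space_eq: "space N2 = space N1" using sets_eq_imp_space_eq[OF sets_eq] by simp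
  have GP: "G \<subseteq> Pow (space N1)" using G(2) sets.sets_into_space by blast
  have generated: "sigma_sets (space N1) G \<subseteq> sets N1" using G(2) by (simp add: sets.sigma_sets_subset)
  from G(1) GP Q show ?thesis
  proof (induction rule: sigma_sets_induct_disjoint)
    case (basic X) then show ?case by (rule agree)
  next
    case empty show ?case by simp
  next
    case (compl X)
    have X1: "X \<in> sets N1" and X2: "X \<in> sets N2" using compl(1) generated sets_eq by blast+
    have "emeasure N1 (space N1 - X) = emeasure N1 (space N1) - emeasure N1 X"
      using emeasure_compl[OF X1] finite_measure.emeasure_finite[OF N1] by simp
    also have "\<dots> = emeasure N2 (space N2) - emeasure N2 X"
      using agree[OF G(3)] compl(2) space_eq by simp
    also have "\<dots> = emeasure N2 (space N1 - X)"
      using emeasure_compl[OF X2] finite_measure.emeasure_finite[OF N2] space_eq by simp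
    finally show ?case .
  next
    case (union X)
    have X1: "range X \<subseteq> sets N1" and X2: "range X \<subseteq> sets N2" using union(2) generated sets_eq by blast+
    have "emeasure N1 (\<Union>i. X i) = (\<Sum>i. emeasure N1 (X i))"
      using suminf_emeasure[OF X1 union(1)] by simp
    also have "\<dots> = (\<Sum>i. emeasure N2 (X i))" using union(3) by simp
    also have "\<dots> = emeasure N2 (\<Union>i. X i)"
      using suminf_emeasure[OF X2 union(1)] by simp
    finally show ?case .
  qed
qed

lemma nn_integral_pos_on_positive_set:
  fixes g :: "'b \<Rightarrow> ennreal"
  assumes g[measurable]: "g \<in> borel_measurable N" and S[measurable]: "S \<in> sets N"
    and pos: "emeasure N S > 0" and g_pos: "\<And>x. x \<in> S \<Longrightarrow> g x > 0"
  shows "(\<integral>\<^sup>+x. g x \<partial>N) > 0"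
proof (rule ccontr)
  assume "\<not> (\<integral>\<^sup>+x. g x \<partial>N) > 0"
  then have "AE x in N. g x = 0" using nn_integral_0_iff_AE[OF g] by simp
  then have "AE x in N. x \<notin> S" by eventually_elim (use g_pos in force)
  then have "emeasure N S = 0"
    using AE_iff_measurable[of S N "\<lambda>x. x \<notin> S"] S sets.sets_into_space[OF S] by auto
  then show False using pos by simp
qed

lemma measure_preimage_same_law:
  assumes law: "distr M borel X = distr M borel X'" and X: "X \<in> borel_measurable M"
    and X': "X' \<in> borel_measurable M" and C: "C \<in> sets borel"
  shows "measure M {\<omega>\<in>space M. X \<omega> \<in> C} = measure M {\<omega>\<in>space M. X' \<omega> \<in> C}"
proof -
  have "measure M {\<omega>\<in>space M. X \<omega> \<in> C} = measure (distr M borel X) C"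
    using X C by (subst measure_distr) (auto simp: vimage_def Int_def conj_commute)
  also have "\<dots> = measure M {\<omega>\<in>space M. X' \<omega> \<in> C}"
    using X' C unfolding law by (subst measure_distr) (auto simp: vimage_def Int_def conj_commute)
  finally show ?thesis .
qed

lemma stationary_marginal:
  assumes Y: "\<And>i. Y i \<in> borel_measurable M" and st: "strictly_stationary M Y"
  shows "distr M borel (Y j) = distr M borel (Y 0)"
proof -
  let ?\<Pi> = "PiM {0::int} (\<lambda>_. borel :: real measure)"
  have shift: "distr M ?\<Pi> (\<lambda>\<omega>. \<lambda>j'\<in>{0}. Y (j' + j) \<omega>) = distr M ?\<Pi> (\<lambda>\<omega>. \<lambda>j'\<in>{0}. Y j' \<omega>)"
    using st unfolding strictly_stationary_def by auto
  have m1: "(\<lambda>\<omega>. \<lambda>j'\<in>{0::int}. Y (j' + j) \<omega>) \<in> M \<rightarrow>\<^sub>M ?\<Pi>"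
    and m2: "(\<lambda>\<omega>. \<lambda>j'\<in>{0::int}. Y j' \<omega>) \<in> M \<rightarrow>\<^sub>M ?\<Pi>"
    by (intro measurable_restrict Y)+
  have c: "(\<lambda>f. f 0) \<in> ?\<Pi> \<rightarrow>\<^sub>M (borel :: real measure)"
    by (rule measurable_component_singleton) simp
  have "distr M borel (Y j) = distr (distr M ?\<Pi> (\<lambda>\<omega>. \<lambda>j'\<in>{0}. Y (j' + j) \<omega>)) borel (\<lambda>f. f 0)"
    by (subst distr_distr[OF c m1]) (simp add: comp_def)
  also have "\<dots> = distr M borel (Y 0)"
    unfolding shift by (subst distr_distr[OF c m2]) (simp add: comp_def)
  finally show ?thesis .
qed

section \<open>The \<open>\<sigma>\<close>-fields generated by a Markov process\<close>

locale markov_process = prob_space M for M :: "'a measure" +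
  fixes Y :: "int \<Rightarrow> 'a \<Rightarrow> real" and P :: "real \<Rightarrow> real measure"
  assumes Y_rv[measurable]: "\<And>i. Y i \<in> borel_measurable M"
    and markov: "homogeneous_markov M Y P"
begin

abbreviation F :: "int set \<Rightarrow> 'a measure" where
  "F I \<equiv> gen_sigma M Y I"

abbreviation CE :: "int set \<Rightarrow> ('a \<Rightarrow> real) \<Rightarrow> 'a \<Rightarrow> real" where
  "CE I f \<equiv> real_cond_exp M (F I) f"

definition generators :: "int set \<Rightarrow> 'a set set" where
  "generators I = {Y i -` B \<inter> space M | i B. i \<in> I \<and> B \<in> sets borel}"

lemma generators_Pow: "generators I \<subseteq> Pow (space M)"
  unfolding generators_def by auto

lemma sets_F: "sets (F I) = sigma_sets (space M) (generators I)"
  unfolding gen_sigma_def generators_def[symmetric] using generators_Pow by simp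

lemma space_F[simp]: "space (F I) = space M"
  unfolding gen_sigma_def generators_def[symmetric] using generators_Pow
  by (simp add: space_measure_of_conv)

lemma sets_F_subset: "sets (F I) \<subseteq> sets M"
proof -
  have "generators I \<subseteq> sets M" unfolding generators_def by auto
  then show ?thesis unfolding sets_F by (simp add: sets.sigma_sets_subset)
qed

lemma subalgebra_F: "subalgebra M (F I)"
  unfolding subalgebra_def using sets_F_subset by simp

lemma sigma_finite_F: "sigma_finite_subalgebra M (F I)"
  by (rule finite_measure_subalgebra_is_sigma_finite)
     (simp add: finite_measure_subalgebra_def finite_measure_subalgebra_axioms_def subalgebra_F)

lemma sets_F_mono: "I \<subseteq> J \<Longrightarrow> sets (F I) \<subseteq> sets (F J)"
  unfolding sets_F by (rule sigma_sets_mono') (auto simp: generators_def)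

lemma subalgebra_F_mono: "I \<subseteq> J \<Longrightarrow> subalgebra (F J) (F I)"
  unfolding subalgebra_def using sets_F_mono by simp

lemma preimage_in_F: "j \<in> I \<Longrightarrow> B \<in> sets borel \<Longrightarrow> Y j -` B \<inter> space M \<in> sets (F I)"
  unfolding sets_F generators_def by (rule sigma_sets.Basic) auto

lemma Y_F[measurable]: "j \<in> I \<Longrightarrow> Y j \<in> borel_measurable (F I)"
  by (rule measurableI) (auto simp: preimage_in_F)

lemma CE_measurable_mono:
  assumes "I \<subseteq> J" shows "CE I f \<in> borel_measurable (F J)"
  by (rule measurable_from_subalg[OF subalgebra_F_mono[OF assms]]) simp

definition cylinders :: "int set \<Rightarrow> 'a set set" where
  "cylinders I = {space M \<inter> (\<Inter>j\<in>J. Y j -` B j) | J B.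
                    finite J \<and> J \<subseteq> I \<and> (\<forall>j\<in>J. B j \<in> sets borel)}"

lemma cylindersI:
  "finite J \<Longrightarrow> J \<subseteq> I \<Longrightarrow> (\<And>j. j \<in> J \<Longrightarrow> B j \<in> sets borel) \<Longrightarrow>
   space M \<inter> (\<Inter>j\<in>J. Y j -` B j) \<in> cylinders I"
  unfolding cylinders_def by blast

lemma cylindersE:
  assumes "Q \<in> cylinders I"
  obtains J B where "Q = space M \<inter> (\<Inter>j\<in>J. Y j -` B j)" "finite J" "J \<subseteq> I"
    "\<forall>j\<in>J. B j \<in> sets borel"
  using assms unfolding cylinders_def by blast

lemma space_in_cylinders: "space M \<in> cylinders I"
  using cylindersI[of "{}" I] by simp

lemma cylinders_Int_stable: "Int_stable (cylinders I)"
proof (rule Int_stableI)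
  fix a b assume "a \<in> cylinders I" "b \<in> cylinders I"
  then obtain J1 B1 J2 B2
    where a: "a = space M \<inter> (\<Inter>j\<in>J1. Y j -` B1 j)" "finite J1" "J1 \<subseteq> I" "\<forall>j\<in>J1. B1 j \<in> sets borel"
      and b: "b = space M \<inter> (\<Inter>j\<in>J2. Y j -` B2 j)" "finite J2" "J2 \<subseteq> I" "\<forall>j\<in>J2. B2 j \<in> sets borel"
    by (elim cylindersE)
  define B where "B j = (if j \<in> J1 then B1 j else UNIV) \<inter> (if j \<in> J2 then B2 j else UNIV)" for j
  have "a \<inter> b = space M \<inter> (\<Inter>j\<in>J1 \<union> J2. Y j -` B j)"
    unfolding a b B_def by (auto split: if_splits)
  also have "\<dots> \<in> cylinders I" using a b by (intro cylindersI) (auto simp: B_def)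
  finally show "a \<inter> b \<in> cylinders I" .
qed

lemma cylinders_in_F: "cylinders I \<subseteq> sets (F I)"
proof
  fix Q assume "Q \<in> cylinders I"
  then obtain J B where Q: "Q = space M \<inter> (\<Inter>j\<in>J. Y j -` B j)" "finite J" "J \<subseteq> I"
    "\<forall>j\<in>J. B j \<in> sets borel" by (elim cylindersE)
  show "Q \<in> sets (F I)"
  proof (cases "J = {}")
    case True then show ?thesis using Q sets.top[of "F I"] by simp
  next
    case False
    then have "Q = (\<Inter>j\<in>J. Y j -` B j \<inter> space (F I))" using Q by auto
    also have "\<dots> \<in> sets (F I)" using Q False
      by (intro sets.finite_INT) (auto intro!: preimage_in_F[simplified space_F[symmetric]])
    finally show ?thesis .
  qed
qed

lemma cylinders_sets: "Q \<in> cylinders I \<Longrightarrow> Q \<in> sets M"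
  using cylinders_in_F sets_F_subset by blast

lemma sets_F_cylinders: "sets (F I) = sigma_sets (space M) (cylinders I)"
proof
  have "generators I \<subseteq> cylinders I"
  proof
    fix x assume "x \<in> generators I"
    then obtain i B where "x = Y i -` B \<inter> space M" "i \<in> I" "B \<in> sets borel"
      unfolding generators_def by blast
    then show "x \<in> cylinders I" using cylindersI[of "{i}" I "\<lambda>_. B"] by (simp add: Int_commute)
  qed
  then show "sets (F I) \<subseteq> sigma_sets (space M) (cylinders I)"
    unfolding sets_F by (rule sigma_sets_mono')
  show "sigma_sets (space M) (cylinders I) \<subseteq> sets (F I)"
    using sets.sigma_sets_subset[of "cylinders I" "F I"] cylinders_in_F by simp
qed

section \<open>Reducing the conditioning \<open>\<sigma>\<close>-field\<close>

lemma cond_exp_reduction_iff: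
  assumes IJ: "I \<subseteq> J" and Q: "Q \<in> sets M"
  shows "(AE x in M. CE J (indicator Q) x = CE I (indicator Q) x) \<longleftrightarrow>
    (\<forall>A\<in>sets (F J). (\<integral>x. indicator A x * indicator Q x \<partial>M) = (\<integral>x. CE I (indicator A) x * indicator Q x \<partial>M))"
proof -
  interpret SJ: sigma_finite_subalgebra M "F J" by (rule sigma_finite_F)
  interpret SI: sigma_finite_subalgebra M "F I" by (rule sigma_finite_F)
  have swap: "(\<integral>x. indicator A x * CE I (indicator Q) x \<partial>M) = (\<integral>x. CE I (indicator A) x * indicator Q x \<partial>M)"
    if "A \<in> sets M" for A by (rule cond_exp_indicator_swap[OF sigma_finite_F that Q])
  have tower: "(\<integral>x. indicator A x * indicator Q x \<partial>M) = (\<integral>x. indicator A x * CE J (indicator Q) x \<partial>M)"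
    if "A \<in> sets (F J)" for A
    using that Q sets_F_subset by (intro SJ.real_cond_exp_intg(2)[symmetric]) (auto intro!: integrable_real_mult_indicator)
  show ?thesis
  proof
    assume ae: "AE x in M. CE J (indicator Q) x = CE I (indicator Q) x"
    show "\<forall>A\<in>sets (F J). (\<integral>x. indicator A x * indicator Q x \<partial>M) = (\<integral>x. CE I (indicator A) x * indicator Q x \<partial>M)"
    proof
      fix A assume A: "A \<in> sets (F J)"
      then have AM[measurable]: "A \<in> sets M" using sets_F_subset by blast
      have "(\<integral>x. indicator A x * indicator Q x \<partial>M) = (\<integral>x. indicator A x * CE I (indicator Q) x \<partial>M)"
        unfolding tower[OF A] using ae by (intro integral_cong_AE) auto
      then show "(\<integral>x. indicator A x * indicator Q x \<partial>M) = (\<integral>x. CE I (indicator A) x * indicator Q x \<partial>M)"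
        using swap[OF AM] by simp
    qed
  next
    assume eq: "\<forall>A\<in>sets (F J). (\<integral>x. indicator A x * indicator Q x \<partial>M) = (\<integral>x. CE I (indicator A) x * indicator Q x \<partial>M)"
    show "AE x in M. CE J (indicator Q) x = CE I (indicator Q) x"
    proof (rule SJ.real_cond_exp_charact)
      fix A assume A: "A \<in> sets (F J)"
      then have "A \<in> sets M" using sets_F_subset by blast
      then have "(\<integral>x. indicator A x * indicator Q x \<partial>M) = (\<integral>x. indicator A x * CE I (indicator Q) x \<partial>M)"
        using eq A swap by simp
      then show "(\<integral>x\<in>A. indicator Q x \<partial>M) = (\<integral>x\<in>A. CE I (indicator Q) x \<partial>M)"
        unfolding set_lebesgue_integral_def by simp
    qed (use Q IJ in \<open>auto intro: CE_measurable_mono\<close>)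
  qed
qed

text \<open>The reduction property extends from an \<open>\<inter>\<close>-stable generator to the generated events:
  both sides of the integral identity are finite measures in \<open>Q\<close>.\<close>
lemma cond_exp_reduction_generated:
  assumes IJ: "I \<subseteq> J"
    and G: "Int_stable G" "G \<subseteq> sets M" "space M \<in> G"
    and base: "\<And>Q. Q \<in> G \<Longrightarrow> AE x in M. CE J (indicator Q) x = CE I (indicator Q) x"
    and Q: "Q \<in> sigma_sets (space M) G"
  shows "AE x in M. CE J (indicator Q) x = CE I (indicator Q) x"
proof -
  interpret SI: sigma_finite_subalgebra M "F I" by (rule sigma_finite_F)
  have QM: "Q \<in> sets M" using Q G(2) sets.sigma_sets_subset by blast
  have "(\<integral>x. indicator A x * indicator Q x \<partial>M) = (\<integral>x. CE I (indicator A) x * indicator Q x \<partial>M)"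
    if A: "A \<in> sets (F J)" for A
  proof -
    have AM[measurable]: "A \<in> sets M" using A sets_F_subset by blast
    let ?g = "CE I (indicator A)"
    have g_int: "integrable M ?g" by (rule SI.real_cond_exp_int(1)[OF integrable_real_indicator[OF AM]])
    have g_nonneg: "AE x in M. 0 \<le> ?g x" by (rule SI.real_cond_exp_pos) auto
    let ?N1 = "density M (\<lambda>x. ennreal (indicator A x))" and ?N2 = "density M (\<lambda>x. ennreal (?g x))"
    have N1: "emeasure ?N1 X = ennreal (\<integral>x. indicator A x * indicator X x \<partial>M)" if "X \<in> sets M" for X
      using emeasure_density_integral[of "indicator A" X] AM that by simp
    have N2: "emeasure ?N2 X = ennreal (\<integral>x. ?g x * indicator X x \<partial>M)" if "X \<in> sets M" for X
      by (rule emeasure_density_integral[OF g_int g_nonneg that])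
    have nonneg: "0 \<le> (\<integral>x. indicator A x * (indicator X x::real) \<partial>M)" "0 \<le> (\<integral>x. ?g x * indicator X x \<partial>M)" for X
      using g_nonneg by (auto intro!: integral_nonneg integral_nonneg_AE split: split_indicator)
    have agree_iff: "emeasure ?N1 X = emeasure ?N2 X \<longleftrightarrow>
        (\<integral>x. indicator A x * indicator X x \<partial>M) = (\<integral>x. ?g x * indicator X x \<partial>M)" if "X \<in> sets M" for X
      unfolding N1[OF that] N2[OF that] using nonneg[of X] by simp
    have "emeasure ?N1 Q = emeasure ?N2 Q"
    proof (rule finite_measures_agree_on_generated)
      show "finite_measure ?N1" "finite_measure ?N2"
        using N1[OF sets.top] N2[OF sets.top] by (auto intro!: finite_measureI)
      fix X assume "X \<in> G"
      then show "emeasure ?N1 X = emeasure ?N2 X"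
        using agree_iff G(2) cond_exp_reduction_iff[OF IJ, of X] base A by blast
    qed (use G Q in auto)
    then show ?thesis using agree_iff[OF QM] by simp
  qed
  then show ?thesis using cond_exp_reduction_iff[OF IJ QM] by blast
qed

lemma cond_exp_reduction_measurable:
  assumes IJ: "I \<subseteq> J" and f: "integrable M f" and \<phi>: "\<phi> \<in> borel_measurable (F I)"
    and ae: "AE \<omega> in M. CE J f \<omega> = \<phi> \<omega>"
  shows "AE \<omega> in M. CE J f \<omega> = CE I f \<omega>"
proof -
  interpret SI: sigma_finite_subalgebra M "F I" by (rule sigma_finite_F)
  interpret SJ: sigma_finite_subalgebra M "F J" by (rule sigma_finite_F)
  have \<phi>M: "\<phi> \<in> borel_measurable M" by (rule measurable_from_subalg[OF subalgebra_F \<phi>])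
  have \<phi>_int: "integrable M \<phi>"
    by (rule integrable_cong_AE_imp[OF SJ.real_cond_exp_int(1)[OF f] \<phi>M ae])
  have "AE \<omega> in M. CE I (CE J f) \<omega> = CE I f \<omega>"
    by (rule SI.real_cond_exp_nested_subalg[OF subalgebra_F subalgebra_F_mono[OF IJ] f])
  moreover have "AE \<omega> in M. CE I (CE J f) \<omega> = CE I \<phi> \<omega>"
    using ae \<phi>M by (intro SI.real_cond_exp_cong) auto
  moreover have "AE \<omega> in M. CE I \<phi> \<omega> = \<phi> \<omega>"
    by (rule SI.real_cond_exp_F_meas[OF \<phi>_int \<phi>])
  ultimately show ?thesis using ae by auto
qed

section \<open>The transition kernel and one step of the chain\<close>

lemma kernel_prob_space: "prob_space (P x)"
  and sets_kernel[measurable_cong]: "sets (P x) = sets borel"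
  using markov unfolding homogeneous_markov_def by auto

declare sets_kernel[simp]

lemma space_kernel[simp]: "space (P x) = UNIV"
  using sets_eq_imp_space_eq[OF sets_kernel] by simp

lemma measure_kernel_measurable[measurable]:
  "B \<in> sets borel \<Longrightarrow> (\<lambda>x. measure (P x) B) \<in> borel_measurable borel"
  using markov unfolding homogeneous_markov_def by auto

lemma markov_step:
  "B \<in> sets borel \<Longrightarrow>
   AE \<omega> in M. CE {..k} (indicator {\<omega>\<in>space M. Y (k + 1) \<omega> \<in> B}) \<omega> = measure (P (Y k \<omega>)) B"
  using markov unfolding homogeneous_markov_def by auto

lemma emeasure_kernel: "emeasure (P x) B = ennreal (measure (P x) B)"
  using kernel_prob_space finite_measure.emeasure_eq_measure unfolding prob_space_def by blast

lemma kernel_measurable[measurable]: "P \<in> borel \<rightarrow>\<^sub>M subprob_algebra borel"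
proof (rule measurable_subprob_algebra)
  fix a show "subprob_space (P a)" using kernel_prob_space by (simp add: prob_space_imp_subprob_space)
  show "sets (P a) = sets borel" by (rule sets_kernel)
next
  fix A :: "real set" assume A: "A \<in> sets borel"
  then show "(\<lambda>a. emeasure (P a) A) \<in> borel_measurable borel" by (simp add: emeasure_kernel)
qed

lemma kernel_pair_measurable:
  assumes pi[measurable]: "\<pi> \<in> N \<rightarrow>\<^sub>M borel"
  shows "(\<lambda>u. P (\<pi> u) \<bind> (\<lambda>z. return (N \<Otimes>\<^sub>M borel) (u, z))) \<in> N \<rightarrow>\<^sub>M subprob_algebra (N \<Otimes>\<^sub>M borel)"
  by (rule measurable_bind[OF measurable_compose[OF pi kernel_measurable]])
     (rule measurable_compose[OF _ return_measurable], simp)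

lemma nn_integral_kernel_pair:
  assumes pi[measurable]: "\<pi> \<in> N \<rightarrow>\<^sub>M borel" and u: "u \<in> space N"
    and h[measurable]: "h \<in> borel_measurable (N \<Otimes>\<^sub>M borel)"
  shows "(\<integral>\<^sup>+v. h v \<partial>(P (\<pi> u) \<bind> (\<lambda>z. return (N \<Otimes>\<^sub>M borel) (u, z)))) = (\<integral>\<^sup>+z. h (u, z) \<partial>P (\<pi> u))"
proof -
  have ret: "(\<lambda>z. return (N \<Otimes>\<^sub>M borel) (u, z)) \<in> P (\<pi> u) \<rightarrow>\<^sub>M subprob_algebra (N \<Otimes>\<^sub>M borel)"
    by (rule measurable_compose[OF _ return_measurable]) (simp add: u)
  have "(\<integral>\<^sup>+v. h v \<partial>(P (\<pi> u) \<bind> (\<lambda>z. return (N \<Otimes>\<^sub>M borel) (u, z))))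
      = (\<integral>\<^sup>+z. \<integral>\<^sup>+v. h v \<partial>return (N \<Otimes>\<^sub>M borel) (u, z) \<partial>P (\<pi> u))"
    by (rule nn_integral_bind[OF h ret])
  also have "\<dots> = (\<integral>\<^sup>+z. h (u, z) \<partial>P (\<pi> u))"
    using u by (intro nn_integral_cong nn_integral_return) (auto simp: space_pair_measure)
  finally show ?thesis .
qed

lemma emeasure_kernel_pair_rectangle:
  assumes pi[measurable]: "\<pi> \<in> N \<rightarrow>\<^sub>M borel" and u: "u \<in> space N"
    and a[measurable]: "a \<in> sets N" and b[measurable]: "b \<in> sets borel"
  shows "emeasure (P (\<pi> u) \<bind> (\<lambda>z. return (N \<Otimes>\<^sub>M borel) (u, z))) (a \<times> b)
       = indicator a u * emeasure (P (\<pi> u)) b"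
proof -
  have "sets (P (\<pi> u) \<bind> (\<lambda>z. return (N \<Otimes>\<^sub>M borel) (u, z))) = sets (N \<Otimes>\<^sub>M borel)"
    by (subst sets_bind[where N="N \<Otimes>\<^sub>M borel"]) auto
  then have "emeasure (P (\<pi> u) \<bind> (\<lambda>z. return (N \<Otimes>\<^sub>M borel) (u, z))) (a \<times> b)
      = (\<integral>\<^sup>+v. indicator (a \<times> b) v \<partial>(P (\<pi> u) \<bind> (\<lambda>z. return (N \<Otimes>\<^sub>M borel) (u, z))))"
    by simp
  also have "\<dots> = (\<integral>\<^sup>+z. indicator a u * indicator b z \<partial>P (\<pi> u))"
    using u by (subst nn_integral_kernel_pair) (auto simp: indicator_times)
  also have "\<dots> = indicator a u * emeasure (P (\<pi> u)) b"
    by (subst nn_integral_cmult) auto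
  finally show ?thesis .
qed

lemma emeasure_past_and_next:
  assumes A: "A \<in> sets (F {..k})" and b[measurable]: "b \<in> sets borel"
  shows "emeasure M (A \<inter> {\<omega>\<in>space M. Y (k + 1) \<omega> \<in> b})
       = (\<integral>\<^sup>+\<omega>. ennreal (indicator A \<omega> * measure (P (Y k \<omega>)) b) \<partial>M)"
proof -
  interpret S: sigma_finite_subalgebra M "F {..k}" by (rule sigma_finite_F)
  let ?Yb = "{\<omega>\<in>space M. Y (k + 1) \<omega> \<in> b}"
  have AM[measurable]: "A \<in> sets M" using A sets_F_subset by blast
  have "emeasure M (A \<inter> ?Yb) = ennreal (\<integral>\<omega>. indicator A \<omega> * indicator ?Yb \<omega> \<partial>M)"
    by (simp add: emeasure_eq_measure indicator_inter_arith[symmetric])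
  also have "(\<integral>\<omega>. indicator A \<omega> * indicator ?Yb \<omega> \<partial>M) = (\<integral>\<omega>. indicator A \<omega> * CE {..k} (indicator ?Yb) \<omega> \<partial>M)"
    using A by (intro S.real_cond_exp_intg(2)[symmetric]) (auto intro!: integrable_real_mult_indicator)
  also have "\<dots> = (\<integral>\<omega>. indicator A \<omega> * measure (P (Y k \<omega>)) b \<partial>M)"
    using markov_step[OF b, of k] by (intro integral_cong_AE) auto
  also have "ennreal \<dots> = (\<integral>\<^sup>+\<omega>. ennreal (indicator A \<omega> * measure (P (Y k \<omega>)) b) \<partial>M)"
    by (rule nn_integral_eq_integral[symmetric])
       (auto intro!: integrable_const_bound[where B=1] prob_space.prob_le_1[OF kernel_prob_space]
         split: split_indicator)
  finally show ?thesis .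
qed

lemma joint_law_next:
  assumes U: "U \<in> F {..k} \<rightarrow>\<^sub>M N" and pi[measurable]: "\<pi> \<in> N \<rightarrow>\<^sub>M borel"
    and UY: "\<And>\<omega>. \<omega> \<in> space M \<Longrightarrow> \<pi> (U \<omega>) = Y k \<omega>"
  shows "distr M (N \<Otimes>\<^sub>M borel) (\<lambda>\<omega>. (U \<omega>, Y (k+1) \<omega>))
       = distr M N U \<bind> (\<lambda>u. P (\<pi> u) \<bind> (\<lambda>z. return (N \<Otimes>\<^sub>M borel) (u, z)))"
    (is "?L = ?R")
proof -
  have UM[measurable]: "U \<in> M \<rightarrow>\<^sub>M N" by (rule measurable_from_subalg[OF subalgebra_F U])
  let ?\<kappa> = "\<lambda>u. P (\<pi> u) \<bind> (\<lambda>z. return (N \<Otimes>\<^sub>M borel) (u, z))"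
  have kappa[measurable]: "?\<kappa> \<in> N \<rightarrow>\<^sub>M subprob_algebra (N \<Otimes>\<^sub>M borel)"
    by (rule kernel_pair_measurable[OF pi])
  have sets_kappa: "sets (?\<kappa> u) = sets (N \<Otimes>\<^sub>M borel)" for u
    by (subst sets_bind[where N="N \<Otimes>\<^sub>M borel"]) auto
  have ne: "space (distr M N U) \<noteq> {}"
    using measurable_space[OF UM] not_empty by auto
  let ?E = "{a \<times> b | a b. a \<in> sets N \<and> b \<in> sets (borel :: real measure)}"
  show ?thesis
  proof (rule measure_eqI_generator_eq[OF Int_stable_pair_measure_generator[of N borel],
        where \<Omega>="space N \<times> space borel" and A="\<lambda>_. space N \<times> space borel"])
    show "?E \<subseteq> Pow (space N \<times> space borel)"
      using sets.sets_into_space by fastforce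
    show "sets ?L = sigma_sets (space N \<times> space borel) ?E" by (simp add: sets_pair_measure)
    show "sets ?R = sigma_sets (space N \<times> space borel) ?E"
      using sets_bind[of "distr M N U" ?\<kappa> "N \<Otimes>\<^sub>M borel"] sets_kappa ne
      by (simp add: sets_pair_measure)
    show "range (\<lambda>_. space N \<times> space borel) \<subseteq> ?E"
      using sets.top[of N] sets.top[of "borel :: real measure"] by blast
    show "(\<Union>i::nat. space N \<times> space borel) = space N \<times> space borel" by simp
    have "prob_space ?L" by (rule prob_space_distr) simp
    then have "finite_measure ?L" unfolding prob_space_def by blast
    from finite_measure.emeasure_finite[OF this]
    show "emeasure ?L (space N \<times> space borel) \<noteq> \<infinity>" by simp
  next
    fix X assume "X \<in> ?E"
    then obtain a b where X: "X = a \<times> b" and a[measurable]: "a \<in> sets N" and b[measurable]: "b \<in> sets (borel::real measure)"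
      by blast
    let ?A = "U -` a \<inter> space M"
    have A: "?A \<in> sets (F {..k})" using measurable_sets[OF U a] by simp
    have "emeasure ?L X = emeasure M (?A \<inter> {\<omega>\<in>space M. Y (k + 1) \<omega> \<in> b})"
      unfolding X by (subst emeasure_distr) (auto intro!: arg_cong[where f="emeasure M"])
    also have "\<dots> = (\<integral>\<^sup>+\<omega>. ennreal (indicator ?A \<omega> * measure (P (Y k \<omega>)) b) \<partial>M)"
      by (rule emeasure_past_and_next[OF A b])
    also have "\<dots> = (\<integral>\<^sup>+\<omega>. emeasure (?\<kappa> (U \<omega>)) X \<partial>M)"
    proof (intro nn_integral_cong)
      fix \<omega> assume \<omega>: "\<omega> \<in> space M"
      have "emeasure (?\<kappa> (U \<omega>)) (a \<times> b) = indicator a (U \<omega>) * emeasure (P (Y k \<omega>)) b"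
        using emeasure_kernel_pair_rectangle[OF pi measurable_space[OF UM \<omega>] a b] UY[OF \<omega>] by simp
      then show "ennreal (indicator ?A \<omega> * measure (P (Y k \<omega>)) b) = emeasure (?\<kappa> (U \<omega>)) X"
        unfolding X using \<omega> by (auto simp: emeasure_kernel split: split_indicator)
    qed
    also have "\<dots> = emeasure ?R X"
      using emeasure_bind[OF ne, of ?\<kappa> "N \<Otimes>\<^sub>M borel" X] X kappa by (simp add: nn_integral_distr)
    finally show "emeasure ?L X = emeasure ?R X" .
  qed
qed

lemma nn_integral_next:
  assumes U: "U \<in> F {..k} \<rightarrow>\<^sub>M N" and pi[measurable]: "\<pi> \<in> N \<rightarrow>\<^sub>M borel"
    and UY: "\<And>\<omega>. \<omega> \<in> space M \<Longrightarrow> \<pi> (U \<omega>) = Y k \<omega>"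
    and h[measurable]: "h \<in> borel_measurable (N \<Otimes>\<^sub>M borel)"
  shows "(\<integral>\<^sup>+\<omega>. h (U \<omega>, Y (k+1) \<omega>) \<partial>M) = (\<integral>\<^sup>+\<omega>. (\<integral>\<^sup>+z. h (U \<omega>, z) \<partial>P (Y k \<omega>)) \<partial>M)"
proof -
  have UM[measurable]: "U \<in> M \<rightarrow>\<^sub>M N" by (rule measurable_from_subalg[OF subalgebra_F U])
  let ?\<kappa> = "\<lambda>u. P (\<pi> u) \<bind> (\<lambda>z. return (N \<Otimes>\<^sub>M borel) (u, z))"
  have kappa: "?\<kappa> \<in> N \<rightarrow>\<^sub>M subprob_algebra (N \<Otimes>\<^sub>M borel)" by (rule kernel_pair_measurable[OF pi])
  have inner[measurable]: "(\<lambda>u. \<integral>\<^sup>+v. h v \<partial>?\<kappa> u) \<in> borel_measurable N"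
    by (rule measurable_compose[OF kappa nn_integral_measurable_subprob_algebra]) simp
  have "(\<integral>\<^sup>+\<omega>. h (U \<omega>, Y (k+1) \<omega>) \<partial>M) = (\<integral>\<^sup>+v. h v \<partial>distr M (N \<Otimes>\<^sub>M borel) (\<lambda>\<omega>. (U \<omega>, Y (k+1) \<omega>)))"
    by (subst nn_integral_distr) auto
  also have "\<dots> = (\<integral>\<^sup>+v. h v \<partial>(distr M N U \<bind> ?\<kappa>))"
    by (subst joint_law_next[OF U pi UY]) auto
  also have "\<dots> = (\<integral>\<^sup>+u. \<integral>\<^sup>+v. h v \<partial>?\<kappa> u \<partial>distr M N U)"
    using kappa by (intro nn_integral_bind[OF h]) simp
  also have "\<dots> = (\<integral>\<^sup>+\<omega>. \<integral>\<^sup>+v. h v \<partial>?\<kappa> (U \<omega>) \<partial>M)"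
    by (subst nn_integral_distr) auto
  also have "\<dots> = (\<integral>\<^sup>+\<omega>. (\<integral>\<^sup>+z. h (U \<omega>, z) \<partial>P (Y k \<omega>)) \<partial>M)"
  proof (intro nn_integral_cong)
    fix \<omega> assume \<omega>: "\<omega> \<in> space M"
    show "(\<integral>\<^sup>+v. h v \<partial>?\<kappa> (U \<omega>)) = (\<integral>\<^sup>+z. h (U \<omega>, z) \<partial>P (Y k \<omega>))"
      using nn_integral_kernel_pair[OF pi measurable_space[OF UM \<omega>] h] UY[OF \<omega>] by simp
  qed
  finally show ?thesis .
qed

lemma integral_kernel_measurable[measurable]:
  fixes g :: "real \<Rightarrow> real"
  assumes [measurable]: "g \<in> borel_measurable borel"
  shows "(\<lambda>x. \<integral>z. g z \<partial>P x) \<in> borel_measurable borel"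
  by (rule measurable_compose[OF kernel_measurable integral_measurable_subprob_algebra]) simp

lemma integral_kernel_bounds:
  fixes g :: "real \<Rightarrow> real"
  assumes [measurable]: "g \<in> borel_measurable borel" and b: "\<And>x. 0 \<le> g x" "\<And>x. g x \<le> 1"
  shows "0 \<le> (\<integral>z. g z \<partial>P x)" "(\<integral>z. g z \<partial>P x) \<le> 1" "integrable (P x) g"
proof -
  interpret Px: prob_space "P x" by (rule kernel_prob_space)
  show g_int: "integrable (P x) g"
    by (rule Px.integrable_const_bound[where B=1])
       (auto simp: b abs_le_iff intro: order_trans[OF _ b(2)] order_trans[OF _ b(1)])
  show "0 \<le> (\<integral>z. g z \<partial>P x)" using b by simp
  have "(\<integral>z. g z \<partial>P x) \<le> (\<integral>z. 1 \<partial>P x)"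
    using g_int b by (intro integral_mono) auto
  then show "(\<integral>z. g z \<partial>P x) \<le> 1" using Px.prob_space by simp
qed

lemma cond_exp_next:
  fixes g :: "real \<Rightarrow> real"
  assumes gm[measurable]: "g \<in> borel_measurable borel" and b: "\<And>x. 0 \<le> g x" "\<And>x. g x \<le> 1"
  shows "AE \<omega> in M. CE {..k} (\<lambda>\<omega>. g (Y (k+1) \<omega>)) \<omega> = (\<integral>z. g z \<partial>P (Y k \<omega>))"
proof -
  interpret S: sigma_finite_subalgebra M "F {..k}" by (rule sigma_finite_F)
  note Pg = integral_kernel_bounds[OF gm b]
  have int_next: "integrable M (\<lambda>\<omega>. g (Y (k+1) \<omega>))"
    by (rule integrable_const_bound[where B=1]) (auto simp: b abs_le_iff intro: order_trans[OF _ b(2)])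
  have int_kernel: "integrable M (\<lambda>\<omega>. \<integral>z. g z \<partial>P (Y k \<omega>))"
    by (rule integrable_const_bound[where B=1]) (use Pg in \<open>auto simp: abs_le_iff\<close>)
  show ?thesis
  proof (rule S.real_cond_exp_charact[OF _ int_next int_kernel])
    show "(\<lambda>\<omega>. \<integral>z. g z \<partial>P (Y k \<omega>)) \<in> borel_measurable (F {..k})"
      by (rule measurable_compose[OF Y_F integral_kernel_measurable[OF gm]]) simp
  next
    fix A assume A: "A \<in> sets (F {..k})"
    have AM[measurable]: "A \<in> sets M" using A sets_F_subset by blast
    have U: "(\<lambda>\<omega>. (indicator A \<omega> :: real, Y k \<omega>)) \<in> F {..k} \<rightarrow>\<^sub>M borel \<Otimes>\<^sub>M borel"
      by (intro measurable_Pair borel_measurable_indicator A Y_F) simp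
    have "(\<integral>\<^sup>+\<omega>. ennreal (indicator A \<omega> * g (Y (k+1) \<omega>)) \<partial>M)
        = (\<integral>\<^sup>+\<omega>. (\<integral>\<^sup>+z. ennreal (indicator A \<omega> * g z) \<partial>P (Y k \<omega>)) \<partial>M)"
      using nn_integral_next[OF U measurable_snd, of "\<lambda>v. ennreal (fst (fst v) * g (snd v))"] by simp
    also have "\<dots> = (\<integral>\<^sup>+\<omega>. ennreal (indicator A \<omega> * (\<integral>z. g z \<partial>P (Y k \<omega>))) \<partial>M)"
      using Pg b by (intro nn_integral_cong) (auto simp: nn_integral_eq_integral split: split_indicator)
    finally have "ennreal (\<integral>\<omega>. indicator A \<omega> * g (Y (k+1) \<omega>) \<partial>M)
        = ennreal (\<integral>\<omega>. indicator A \<omega> * (\<integral>z. g z \<partial>P (Y k \<omega>)) \<partial>M)"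
      using integrable_mult_indicator[OF AM int_next] integrable_mult_indicator[OF AM int_kernel] b Pg
      by (simp add: nn_integral_eq_integral[symmetric])
    moreover have "0 \<le> (\<integral>\<omega>. indicator A \<omega> * (\<integral>z. g z \<partial>P (Y k \<omega>)) \<partial>M)" using Pg by simp
    ultimately show "(\<integral>\<omega>\<in>A. g (Y (k+1) \<omega>) \<partial>M) = (\<integral>\<omega>\<in>A. (\<integral>z. g z \<partial>P (Y k \<omega>)) \<partial>M)"
      unfolding set_lebesgue_integral_def using b by simp
  qed
qed

section \<open>The Markov property for events\<close>

text \<open>For a block event \<open>{Y\<^sub>k \<in> B\<^sub>k, \<dots>, Y\<^sub>k\<^sub>+\<^sub>n \<in> B\<^sub>k\<^sub>+\<^sub>n}\<close> the conditional probability given the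
  past up to time \<open>k\<close> is a function of \<open>Y\<^sub>k\<close> alone (induction on the length of the block,
  peeling off the first time with \<open>cond_exp_next\<close>).\<close>
lemma markov_block:
  assumes B: "\<And>j. B j \<in> sets borel"
  shows "\<exists>h\<in>borel_measurable borel. (\<forall>x. 0 \<le> h x \<and> h x \<le> 1) \<and>
    (AE \<omega> in M. CE {..k} (indicator (space M \<inter> (\<Inter>j\<in>{k..k + int n}. Y j -` B j))) \<omega> = h (Y k \<omega>))"
proof (induction n arbitrary: k)
  case 0
  interpret S: sigma_finite_subalgebra M "F {..k}" by (rule sigma_finite_F)
  have block: "space M \<inter> (\<Inter>j\<in>{k..k + int 0}. Y j -` B j) = Y k -` B k \<inter> space M" by auto
  have "Y k -` B k \<inter> space M \<in> sets (F {..k})" using B by (intro preimage_in_F) auto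
  then have "AE \<omega> in M. CE {..k} (indicator (Y k -` B k \<inter> space M)) \<omega> = indicator (Y k -` B k \<inter> space M) \<omega>"
    using sets_F_subset by (intro S.real_cond_exp_F_meas) auto
  then have "AE \<omega> in M. CE {..k} (indicator (space M \<inter> (\<Inter>j\<in>{k..k + int 0}. Y j -` B j))) \<omega> = indicator (B k) (Y k \<omega>)"
    unfolding block using AE_space by eventually_elim (auto split: split_indicator)
  then show ?case using B by (intro bexI[of _ "indicator (B k)"]) (auto split: split_indicator)
next
  case (Suc n)
  interpret S: sigma_finite_subalgebra M "F {..k}" by (rule sigma_finite_F)
  obtain h' where h'm[measurable]: "h' \<in> borel_measurable borel" and h'b: "\<forall>x. 0 \<le> h' x \<and> h' x \<le> 1"
    and h'ae: "AE \<omega> in M. CE {..k+1} (indicator (space M \<inter> (\<Inter>j\<in>{k+1..k+1 + int n}. Y j -` B j))) \<omega> = h' (Y (k+1) \<omega>)"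
    using Suc.IH[of "k+1"] by blast
  define Q where "Q = space M \<inter> (\<Inter>j\<in>{k+1..k+1 + int n}. Y j -` B j)"
  define Qk where "Qk = space M \<inter> (\<Inter>j\<in>{k..k + int (Suc n)}. Y j -` B j)"
  have QM[measurable]: "Q \<in> sets M" "Qk \<in> sets M"
    unfolding Q_def Qk_def using B by (auto intro!: cylinders_sets cylindersI)
  have Bk[measurable]: "B k \<in> sets borel" using B by simp
  have "{k..k + int (Suc n)} = insert k {k+1..k+1 + int n}" by auto
  then have split: "indicator Qk \<omega> = indicator (B k) (Y k \<omega>) * (indicator Q \<omega> :: real)" if "\<omega> \<in> space M" for \<omega>
    using that unfolding Q_def Qk_def by (auto split: split_indicator)
  have "AE \<omega> in M. CE {..k} (indicator Qk) \<omega> = CE {..k} (\<lambda>\<omega>. indicator (B k) (Y k \<omega>) * indicator Q \<omega>) \<omega>"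
    using split by (intro S.real_cond_exp_cong) auto
  moreover have "AE \<omega> in M. CE {..k} (\<lambda>\<omega>. indicator (B k) (Y k \<omega>) * indicator Q \<omega>) \<omega>
      = indicator (B k) (Y k \<omega>) * CE {..k} (indicator Q) \<omega>"
    by (rule S.real_cond_exp_mult)
       (auto intro!: measurable_compose[OF Y_F] integrable_const_bound[where B=1] split: split_indicator)
  moreover have "AE \<omega> in M. CE {..k} (CE {..k+1} (indicator Q)) \<omega> = CE {..k} (indicator Q) \<omega>"
    by (rule S.real_cond_exp_nested_subalg[OF subalgebra_F subalgebra_F_mono]) auto
  moreover have "AE \<omega> in M. CE {..k} (CE {..k+1} (indicator Q)) \<omega> = CE {..k} (\<lambda>\<omega>. h' (Y (k+1) \<omega>)) \<omega>"
    using h'ae unfolding Q_def[symmetric] by (intro S.real_cond_exp_cong) auto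
  moreover have "AE \<omega> in M. CE {..k} (\<lambda>\<omega>. h' (Y (k+1) \<omega>)) \<omega> = (\<integral>z. h' z \<partial>P (Y k \<omega>))"
    using h'b by (intro cond_exp_next) auto
  ultimately have "AE \<omega> in M. CE {..k} (indicator Qk) \<omega> = indicator (B k) (Y k \<omega>) * (\<integral>z. h' z \<partial>P (Y k \<omega>))"
    by eventually_elim simp
  moreover have "0 \<le> indicator (B k) x * (\<integral>z. h' z \<partial>P x) \<and> indicator (B k) x * (\<integral>z. h' z \<partial>P x) \<le> (1::real)" for x
    using integral_kernel_bounds[OF h'm] h'b by (auto split: split_indicator)
  ultimately show ?case unfolding Qk_def
    by (intro bexI[of _ "\<lambda>x. indicator (B k) x * (\<integral>z. h' z \<partial>P x)"]) auto
qed

lemma markov_future: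
  assumes Q: "Q \<in> sets (F {k..})"
  shows "AE \<omega> in M. CE {..k} (indicator Q) \<omega> = CE {k} (indicator Q) \<omega>"
proof (rule cond_exp_reduction_generated[of "{k}" "{..k}" "cylinders {k..}"])
  show "Q \<in> sigma_sets (space M) (cylinders {k..})" using Q sets_F_cylinders by simp
next
  fix Q assume "Q \<in> cylinders {k..}"
  then obtain J B where Q: "Q = space M \<inter> (\<Inter>j\<in>J. Y j -` B j)" and J: "finite J" "J \<subseteq> {k..}"
    and B: "\<forall>j\<in>J. B j \<in> sets borel" by (elim cylindersE)
  define n where "n = nat (Max (insert k J) - k)"
  define B' where "B' j = (if j \<in> J then B j else UNIV)" for j
  have "J \<subseteq> {k..k + int n}"
    using J Max_ge[of "insert k J"] unfolding n_def by fastforce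
  then have Q_block: "Q = space M \<inter> (\<Inter>j\<in>{k..k + int n}. Y j -` B' j)"
    unfolding Q B'_def by (auto split: if_splits)
  have B': "\<And>j. B' j \<in> sets borel" unfolding B'_def using B by auto
  obtain h where hm: "h \<in> borel_measurable borel"
    and hae: "AE \<omega> in M. CE {..k} (indicator Q) \<omega> = h (Y k \<omega>)"
    using markov_block[where B=B' and k=k and n=n, OF B'] unfolding Q_block[symmetric] by auto
  show "AE \<omega> in M. CE {..k} (indicator Q) \<omega> = CE {k} (indicator Q) \<omega>"
    using \<open>Q \<in> cylinders {k..}\<close> cylinders_sets
    by (intro cond_exp_reduction_measurable[OF _ _ _ hae] measurable_compose[OF Y_F hm]) auto
qed (auto simp: cylinders_Int_stable cylinders_sets space_in_cylinders)

text \<open>Time-reversed Markov property: given the future from time \<open>k\<close> on, the past up to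
  time \<open>k\<close> depends only on \<open>Y\<^sub>k\<close>; this follows from \<open>markov_future\<close> by symmetry of the
  characterisation \<open>cond_exp_reduction_iff\<close>.\<close>
lemma markov_past:
  assumes R: "R \<in> sets (F {..k})"
  shows "AE \<omega> in M. CE {k..} (indicator R) \<omega> = CE {k} (indicator R) \<omega>"
proof -
  have RM: "R \<in> sets M" using R sets_F_subset by blast
  have "(\<integral>x. indicator A x * indicator R x \<partial>M) = (\<integral>x. CE {k} (indicator A) x * indicator R x \<partial>M)"
    if A: "A \<in> sets (F {k..})" for A
  proof -
    have AM: "A \<in> sets M" using A sets_F_subset by blast
    have "(\<integral>x. indicator R x * indicator A x \<partial>M) = (\<integral>x. CE {k} (indicator R) x * indicator A x \<partial>M)"
      using markov_future[OF A] cond_exp_reduction_iff[of "{k}" "{..k}" A] AM R by simp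
    also have "\<dots> = (\<integral>x. indicator R x * CE {k} (indicator A) x \<partial>M)"
      by (rule cond_exp_indicator_swap[OF sigma_finite_F RM AM, symmetric])
    finally show ?thesis by (simp add: mult.commute)
  qed
  then show ?thesis using cond_exp_reduction_iff[of "{k}" "{k..}" R] RM by simp
qed

text \<open>For a past event \<open>R\<close> before \<open>i-1\<close> and a future event \<open>Q\<close> after \<open>i+1\<close>, the conditional
  probability of \<open>R \<inter> Q\<close> given \<open>Y\<^sub>i\<^sub>-\<^sub>1,Y\<^sub>i,Y\<^sub>i\<^sub>+\<^sub>1\<close> factorises as \<open>P(Q | Y\<^sub>i\<^sub>+\<^sub>1) P(R | Y\<^sub>i\<^sub>-\<^sub>1)\<close>:
  condition first on the past up to \<open>i+1\<close> (replacing \<open>Q\<close> by \<open>P(Q | Y\<^sub>i\<^sub>+\<^sub>1)\<close>), then on the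
  future from \<open>i-1\<close> on (replacing \<open>R\<close> by \<open>P(R | Y\<^sub>i\<^sub>-\<^sub>1)\<close>).\<close>
lemma cond_exp_past_future_product:
  assumes RF: "R \<in> sets (F {..i-1})" and QF: "Q \<in> sets (F {i+1..})"
  shows "AE \<omega> in M. CE {i-1,i,i+1} (indicator (R \<inter> Q)) \<omega>
                     = CE {i+1} (indicator Q) \<omega> * CE {i-1} (indicator R) \<omega>"
proof -
  let ?K = "{i-1,i,i+1}"
  interpret SK: sigma_finite_subalgebra M "F ?K" by (rule sigma_finite_F)
  interpret S1: sigma_finite_subalgebra M "F {..i+1}" by (rule sigma_finite_F)
  have RM[measurable]: "R \<in> sets M" and QM[measurable]: "Q \<in> sets M"
    using RF QF sets_F_subset by blast+
  have ind: "(indicator (R \<inter> Q) :: 'a \<Rightarrow> real) = (\<lambda>\<omega>. indicator R \<omega> * indicator Q \<omega>)"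
    by (simp add: indicator_inter_arith[symmetric])
  define q where "q = CE {i+1} (indicator Q)"
  define r where "r = CE {i-1} (indicator R)"
  have q_int: "integrable M q" and r_int: "integrable M r" unfolding q_def r_def
    by (auto intro!: sigma_finite_subalgebra.real_cond_exp_int(1)[OF sigma_finite_F])
  have q_K: "q \<in> borel_measurable (F ?K)" and r_K: "r \<in> borel_measurable (F ?K)"
    unfolding q_def r_def by (auto intro!: CE_measurable_mono)
  have "R \<in> sets (F {..i+1})" using RF sets_F_mono[of "{..i-1}" "{..i+1}"] by auto
  then have "AE \<omega> in M. CE {..i+1} (indicator (R \<inter> Q)) \<omega> = indicator R \<omega> * CE {..i+1} (indicator Q) \<omega>"
    unfolding ind by (intro S1.real_cond_exp_mult) (auto intro!: integrable_real_mult_indicator)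
  then have past: "AE \<omega> in M. CE {..i+1} (indicator (R \<inter> Q)) \<omega> = q \<omega> * indicator R \<omega>"
    using markov_future[OF QF] unfolding q_def by eventually_elim simp
  have "AE \<omega> in M. CE ?K (CE {..i+1} (indicator (R \<inter> Q))) \<omega> = CE ?K (indicator (R \<inter> Q)) \<omega>"
    by (rule SK.real_cond_exp_nested_subalg[OF subalgebra_F subalgebra_F_mono]) auto
  moreover have "AE \<omega> in M. CE ?K (CE {..i+1} (indicator (R \<inter> Q))) \<omega> = CE ?K (\<lambda>\<omega>. q \<omega> * indicator R \<omega>) \<omega>"
    using past q_int by (intro SK.real_cond_exp_cong) (auto simp: q_def)
  moreover have "AE \<omega> in M. CE ?K (\<lambda>\<omega>. q \<omega> * indicator R \<omega>) \<omega> = q \<omega> * CE ?K (indicator R) \<omega>"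
    using q_K integrable_mult_indicator[OF RM q_int] by (intro SK.real_cond_exp_mult) (auto simp: mult.commute)
  moreover have "AE \<omega> in M. CE ?K (CE {i-1..} (indicator R)) \<omega> = CE ?K (indicator R) \<omega>"
    by (rule SK.real_cond_exp_nested_subalg[OF subalgebra_F subalgebra_F_mono]) auto
  moreover have "AE \<omega> in M. CE ?K (CE {i-1..} (indicator R)) \<omega> = CE ?K r \<omega>"
    using markov_past[OF RF] by (intro SK.real_cond_exp_cong) (auto simp: r_def)
  moreover have "AE \<omega> in M. CE ?K r \<omega> = r \<omega>"
    by (rule SK.real_cond_exp_F_meas[OF r_int r_K])
  ultimately show ?thesis unfolding q_def r_def by eventually_elim simp
qed

text \<open>It suffices to check this on cylinders, which
  split as \<open>R \<inter> Q\<close> with \<open>R\<close> before and \<open>Q\<close> after time \<open>i\<close>.\<close>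
lemma markov_two_sided:
  assumes S: "S \<in> sets (F (-{i}))"
  shows "AE \<omega> in M. CE {i-1,i,i+1} (indicator S) \<omega> = CE {i-1,i+1} (indicator S) \<omega>"
proof (rule cond_exp_reduction_generated[of "{i-1,i+1}" "{i-1,i,i+1}" "cylinders (-{i})"])
  show "S \<in> sigma_sets (space M) (cylinders (-{i}))" using S sets_F_cylinders by simp
next
  fix S assume S_cyl: "S \<in> cylinders (-{i})"
  then obtain J B where S: "S = space M \<inter> (\<Inter>j\<in>J. Y j -` B j)" and J: "finite J" "J \<subseteq> -{i}"
    and B: "\<forall>j\<in>J. B j \<in> sets borel" by (elim cylindersE)
  define R where "R = space M \<inter> (\<Inter>j\<in>J \<inter> {..i-1}. Y j -` B j)"
  define Q where "Q = space M \<inter> (\<Inter>j\<in>J \<inter> {i+1..}. Y j -` B j)"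
  have RF: "R \<in> sets (F {..i-1})" and QF: "Q \<in> sets (F {i+1..})"
    unfolding R_def Q_def using J B by (auto intro!: cylinders_in_F[THEN subsetD] cylindersI)
  have "J = (J \<inter> {..i-1}) \<union> (J \<inter> {i+1..})"
  proof (intro set_eqI iffI)
    fix j assume "j \<in> J"
    then have "j \<noteq> i" using J by auto
    then show "j \<in> (J \<inter> {..i-1}) \<union> (J \<inter> {i+1..})" using \<open>j \<in> J\<close> by auto
  qed auto
  then have "S = R \<inter> Q" unfolding S R_def Q_def by auto
  then show "AE \<omega> in M. CE {i-1,i,i+1} (indicator S) \<omega> = CE {i-1,i+1} (indicator S) \<omega>"
    using cond_exp_past_future_product[OF RF QF] cylinders_sets[OF S_cyl]
    by (intro cond_exp_reduction_measurable) (auto intro!: borel_measurable_times CE_measurable_mono)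
qed (auto simp: cylinders_Int_stable cylinders_sets space_in_cylinders)

lemma neighbour_cond_prob_vanishes:
  assumes S: "S \<in> sets (F (-{i}))" and K: "K \<in> sets (F {i-1,i,i+1})"
    and disjoint: "measure M (K \<inter> S) = 0"
  shows "AE \<omega> in M. \<omega> \<in> K \<longrightarrow> CE {i-1,i+1} (indicator S) \<omega> = 0"
proof -
  interpret SK: sigma_finite_subalgebra M "F {i-1,i,i+1}" by (rule sigma_finite_F)
  interpret S2: sigma_finite_subalgebra M "F {i-1,i+1}" by (rule sigma_finite_F)
  let ?\<phi> = "CE {i-1,i+1} (indicator S)"
  have SM[measurable]: "S \<in> sets M" and KM[measurable]: "K \<in> sets M" using S K sets_F_subset by blast+
  have \<phi>_int: "integrable M ?\<phi>" by (rule S2.real_cond_exp_int(1)) simp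
  have \<phi>_nonneg: "AE \<omega> in M. 0 \<le> ?\<phi> \<omega>" by (rule S2.real_cond_exp_pos) auto
  have "(\<integral>\<omega>. indicator K \<omega> * ?\<phi> \<omega> \<partial>M) = (\<integral>\<omega>. indicator K \<omega> * CE {i-1,i,i+1} (indicator S) \<omega> \<partial>M)"
    using markov_two_sided[OF S] by (intro integral_cong_AE) auto
  also have "\<dots> = (\<integral>\<omega>. indicator K \<omega> * indicator S \<omega> \<partial>M)"
    using K by (intro SK.real_cond_exp_intg(2)) (auto intro!: integrable_real_mult_indicator)
  also have "\<dots> = 0" using disjoint by (simp add: indicator_inter_arith[symmetric])
  finally have "AE \<omega> in M. indicator K \<omega> * ?\<phi> \<omega> = 0"
    using integrable_mult_indicator[OF KM \<phi>_int] \<phi>_nonneg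
    by (subst integral_nonneg_eq_0_iff_AE[symmetric]) (auto elim!: eventually_mono split: split_indicator)
  then show ?thesis by eventually_elim (auto simp: indicator_def)
qed

section \<open>Finite-dimensional laws\<close>

lemma two_state_event:
  assumes D: "D \<in> sets (F {a,b})"
  obtains D' where "D' \<in> sets (borel \<Otimes>\<^sub>M borel :: (real \<times> real) measure)"
    "D = (\<lambda>\<omega>. (Y a \<omega>, Y b \<omega>)) -` D' \<inter> space M"
proof -
  have "D \<in> sigma_sets (space M) (generators {a,b})" using D sets_F by simp
  then have "\<exists>D'\<in>sets (borel \<Otimes>\<^sub>M borel :: (real \<times> real) measure). D = (\<lambda>\<omega>. (Y a \<omega>, Y b \<omega>)) -` D' \<inter> space M"
  proof (induction rule: sigma_sets.induct)
    case (Basic X)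
    then obtain j C where X: "X = Y j -` C \<inter> space M" "j \<in> {a,b}" "C \<in> sets borel"
      unfolding generators_def by blast
    then consider "j = a" | "j = b" by blast
    then show ?case
    proof cases
      case 1 then show ?thesis using X by (intro bexI[of _ "C \<times> UNIV"]) auto
    next
      case 2 then show ?thesis using X by (intro bexI[of _ "UNIV \<times> C"]) auto
    qed
  next
    case Empty
    show ?case by (intro bexI[of _ "{}"]) auto
  next
    case (Compl X)
    then obtain D' where D': "D' \<in> sets (borel \<Otimes>\<^sub>M borel)" "X = (\<lambda>\<omega>. (Y a \<omega>, Y b \<omega>)) -` D' \<inter> space M"
      by blast
    have "UNIV - D' \<in> sets (borel \<Otimes>\<^sub>M borel)"
      using sets.compl_sets[OF D'(1)] by (simp add: space_pair_measure)
    then show ?case using D' by (intro bexI[of _ "UNIV - D'"]) auto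
  next
    case (Union X)
    then obtain D' where D': "\<And>n. D' n \<in> sets (borel \<Otimes>\<^sub>M borel)"
      "\<And>n. X n = (\<lambda>\<omega>. (Y a \<omega>, Y b \<omega>)) -` D' n \<inter> space M"
      by metis
    show ?case using D' by (intro bexI[of _ "\<Union>n. D' n"]) auto
  qed
  then show ?thesis using that by blast
qed

lemma triple_law:
  assumes E[measurable]: "E \<in> sets ((borel \<Otimes>\<^sub>M borel) \<Otimes>\<^sub>M borel :: ((real \<times> real) \<times> real) measure)"
  shows "emeasure M {\<omega>\<in>space M. ((Y (i-1) \<omega>, Y i \<omega>), Y (i+1) \<omega>) \<in> E}
    = (\<integral>\<^sup>+x. \<integral>\<^sup>+y. \<integral>\<^sup>+z. indicator E ((x, y), z) \<partial>P y \<partial>P x \<partial>distr M borel (Y (i-1)))"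
proof -
  define h where "h u = (\<integral>\<^sup>+z. indicator E (u, z) \<partial>P (snd u))" for u :: "real \<times> real"
  have hm[measurable]: "h \<in> borel_measurable (borel \<Otimes>\<^sub>M borel)"
    unfolding h_def
    by (rule nn_integral_measurable_subprob_algebra2[where N=borel])
       (simp, rule measurable_compose[OF measurable_snd kernel_measurable])
  have pair: "(\<lambda>\<omega>. (Y (i-1) \<omega>, Y i \<omega>)) \<in> F {..i} \<rightarrow>\<^sub>M borel \<Otimes>\<^sub>M borel"
    by (intro measurable_Pair Y_F) auto
  have "emeasure M {\<omega>\<in>space M. ((Y (i-1) \<omega>, Y i \<omega>), Y (i+1) \<omega>) \<in> E}
      = (\<integral>\<^sup>+\<omega>. indicator E ((Y (i-1) \<omega>, Y i \<omega>), Y (i+1) \<omega>) \<partial>M)"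
  proof -
    have "{\<omega>\<in>space M. ((Y (i-1) \<omega>, Y i \<omega>), Y (i+1) \<omega>) \<in> E} \<in> sets M" by measurable
    then have "emeasure M {\<omega>\<in>space M. ((Y (i-1) \<omega>, Y i \<omega>), Y (i+1) \<omega>) \<in> E}
       = (\<integral>\<^sup>+\<omega>. indicator {\<omega>\<in>space M. ((Y (i-1) \<omega>, Y i \<omega>), Y (i+1) \<omega>) \<in> E} \<omega> \<partial>M)" by simp
    also have "\<dots> = (\<integral>\<^sup>+\<omega>. indicator E ((Y (i-1) \<omega>, Y i \<omega>), Y (i+1) \<omega>) \<partial>M)"
      by (intro nn_integral_cong) (auto split: split_indicator)
    finally show ?thesis .
  qed
  also have "\<dots> = (\<integral>\<^sup>+\<omega>. h (Y (i-1) \<omega>, Y i \<omega>) \<partial>M)"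
    unfolding h_def using nn_integral_next[OF pair measurable_snd _ E[THEN borel_measurable_indicator]] by simp
  also have "\<dots> = (\<integral>\<^sup>+\<omega>. \<integral>\<^sup>+y. h (Y (i-1) \<omega>, y) \<partial>P (Y (i-1) \<omega>) \<partial>M)"
    using nn_integral_next[OF Y_F[of "i-1" "{..i-1}"] measurable_id _ hm] by simp
  also have "\<dots> = (\<integral>\<^sup>+x. \<integral>\<^sup>+y. h (x, y) \<partial>P x \<partial>distr M borel (Y (i-1)))"
  proof (subst nn_integral_distr)
    show "(\<lambda>x. \<integral>\<^sup>+y. h (x, y) \<partial>P x) \<in> borel_measurable (distr M borel (Y (i-1)))"
      by (simp, rule nn_integral_measurable_subprob_algebra2[OF _ kernel_measurable]) (simp add: case_prod_beta')
  qed auto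
  finally show ?thesis unfolding h_def by simp
qed

definition stays_in :: "real set \<Rightarrow> int \<Rightarrow> 'a set" where
  "stays_in C i = {\<omega>\<in>space M. Y (i-1) \<omega> \<in> C \<and> Y i \<omega> \<in> C \<and> Y (i+1) \<omega> \<in> C}"

lemma stays_in_triple: "stays_in C i = {\<omega>\<in>space M. ((Y (i-1) \<omega>, Y i \<omega>), Y (i+1) \<omega>) \<in> (C \<times> C) \<times> C}"
  unfolding stays_in_def by auto

lemma measure_stays_in_shift:
  assumes C: "C \<in> sets borel" and law: "distr M borel (Y (i-1)) = distr M borel (Y (k-1))"
  shows "measure M (stays_in C i) = measure M (stays_in C k)"
  using triple_law[of "(C \<times> C) \<times> C" i] triple_law[of "(C \<times> C) \<times> C" k] C law
  unfolding measure_def stays_in_triple by simp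

end

section \<open>Transition densities that are positive on \<open>A\<^sub>1 \<union> A\<^sub>2\<close>\<close>

locale markov_density = markov_process M Y P for M :: "'a measure" and Y P +
  fixes \<mu> :: "real measure" and f1 :: "real \<Rightarrow> real \<Rightarrow> ennreal" and A A1 A2 :: "real set"
  assumes sets_mu[measurable_cong]: "sets \<mu> = sets borel"
    and f1_measurable[measurable]: "\<And>x. f1 x \<in> borel_measurable borel"
    and kernel_density: "\<And>x. P x = density \<mu> (f1 x)"
    and A[measurable]: "A \<in> sets borel"
    and A1[measurable]: "A1 \<in> sets borel" and A1_sub: "A1 \<subseteq> A" and mu_A1: "emeasure \<mu> A1 > 0"
    and A2[measurable]: "A2 \<in> sets borel" and A2_sub: "A2 \<subseteq> - A" and mu_A2: "emeasure \<mu> A2 > 0"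
    and f1_pos: "\<And>x y. x \<in> A1 \<union> A2 \<Longrightarrow> y \<in> A1 \<union> A2 \<Longrightarrow> f1 x y > 0"
begin

lemma emeasure_kernel_density:
  "C \<in> sets borel \<Longrightarrow> emeasure (P y) C = (\<integral>\<^sup>+z. f1 y z * indicator C z \<partial>\<mu>)"
  unfolding kernel_density by (rule emeasure_density) (auto simp: sets_mu)

lemma two_step_measurable:
  assumes E[measurable]: "E \<in> sets ((borel \<Otimes>\<^sub>M borel) \<Otimes>\<^sub>M borel :: ((real \<times> real) \<times> real) measure)"
  shows "(\<lambda>x. \<integral>\<^sup>+y. \<integral>\<^sup>+z. indicator E ((x, y), z) \<partial>P y \<partial>P x) \<in> borel_measurable borel"
proof -
  have "(\<lambda>u::real\<times>real. \<integral>\<^sup>+z. indicator E (u, z) \<partial>P (snd u)) \<in> borel_measurable (borel \<Otimes>\<^sub>M borel)"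
    by (rule nn_integral_measurable_subprob_algebra2[where N=borel])
       (simp, rule measurable_compose[OF measurable_snd kernel_measurable])
  then show ?thesis
    by (intro nn_integral_measurable_subprob_algebra2[OF _ kernel_measurable]) (simp add: case_prod_beta')
qed

lemma kernel_charges_positive_sets:
  assumes y: "y \<in> A1 \<union> A2" and C[measurable]: "C \<in> sets borel" "C \<subseteq> A1 \<union> A2" and pos: "emeasure \<mu> C > 0"
  shows "emeasure (P y) C > 0"
  unfolding emeasure_kernel_density[OF C(1)] using y C pos f1_pos
  by (intro nn_integral_pos_on_positive_set) (auto simp: sets_mu)

lemma ae_kernel_witness_in_A2:
  assumes x: "x \<in> A1 \<union> A2" and ae: "AE y in P x. Q y"
  shows "\<exists>y\<in>A2. Q y"
proof (rule ccontr)
  assume none: "\<not> (\<exists>y\<in>A2. Q y)"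
  from ae have "AE y in P x. y \<notin> A2" by eventually_elim (use none in auto)
  then have "emeasure (P x) A2 = 0"
    using AE_iff_measurable[of A2 "P x" "\<lambda>y. y \<notin> A2"] by auto
  then show False using kernel_charges_positive_sets[OF x A2] mu_A2 by simp
qed

lemma kernel_null_spreads:
  assumes y0: "y0 \<in> A1 \<union> A2" and C[measurable]: "C \<in> sets borel" and null: "emeasure (P y0) C = 0"
  shows "emeasure (P y) (C \<inter> (A1 \<union> A2)) = 0"
proof -
  have "AE z in \<mu>. f1 y0 z * indicator C z = 0"
    using null unfolding emeasure_kernel_density[OF C]
    by (subst (asm) nn_integral_0_iff_AE) auto
  then have "AE z in \<mu>. f1 y z * indicator (C \<inter> (A1 \<union> A2)) z = 0"
  proof eventually_elim
    fix z assume "f1 y0 z * indicator C z = 0"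
    then have "z \<in> A1 \<union> A2 \<Longrightarrow> z \<notin> C" using f1_pos[OF y0, of z] by (auto split: split_indicator)
    then show "f1 y z * indicator (C \<inter> (A1 \<union> A2)) z = 0" by (auto split: split_indicator)
  qed
  then have "(\<integral>\<^sup>+z. f1 y z * indicator (C \<inter> (A1 \<union> A2)) z \<partial>\<mu>) = (\<integral>\<^sup>+z. 0 \<partial>\<mu>)"
    by (rule nn_integral_cong_AE)
  then show ?thesis using emeasure_kernel_density[of "C \<inter> (A1 \<union> A2)" y] by simp
qed

text \<open>Two-step version: if from \<open>x \<in> A\<^sub>1 \<union> A\<^sub>2\<close> the chain a.s. does not reach \<open>C\<close> in two steps
  via a point outside \<open>A\<close>, it a.s. does not reach \<open>C \<inter> (A\<^sub>1 \<union> A\<^sub>2)\<close> in two steps at all, because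
  the intermediate point can be taken in \<open>A\<^sub>2 \<subseteq> -A\<close>.\<close>
lemma two_step_null_spreads:
  assumes x: "x \<in> A1 \<union> A2" and C[measurable]: "C \<in> sets borel"
    and null: "(\<integral>\<^sup>+y. indicator (-A) y * emeasure (P y) C \<partial>P x) = 0"
  shows "(\<integral>\<^sup>+y. emeasure (P y) (C \<inter> (A1 \<union> A2)) \<partial>P x) = 0"
proof -
  have "AE y in P x. indicator (-A) y * emeasure (P y) C = 0"
    using null by (subst (asm) nn_integral_0_iff_AE) auto
  then obtain y0 where y0: "y0 \<in> A2" "indicator (-A) y0 * emeasure (P y0) C = 0"
    using ae_kernel_witness_in_A2[OF x] by blast
  then have "emeasure (P y0) C = 0" using A2_sub by (auto split: split_indicator)
  then have "emeasure (P y) (C \<inter> (A1 \<union> A2)) = 0" for y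
    using kernel_null_spreads[OF _ C] y0(1) by blast
  then show ?thesis by simp
qed

lemma triple_null_spreads:
  fixes \<nu> :: "real measure"
  assumes D'[measurable]: "D' \<in> sets (borel \<Otimes>\<^sub>M borel :: (real \<times> real) measure)"
    and sets_\<nu>[measurable_cong]: "sets \<nu> = sets borel"
    and null: "(\<integral>\<^sup>+x. \<integral>\<^sup>+y. \<integral>\<^sup>+z. indicator {((x,y),z). (x,z) \<in> D' \<and> y \<notin> A} ((x, y), z) \<partial>P y \<partial>P x \<partial>\<nu>) = 0"
  shows "(\<integral>\<^sup>+x. \<integral>\<^sup>+y. \<integral>\<^sup>+z. indicator {((x,y),z). x \<in> A1 \<union> A2 \<and> z \<in> A1 \<union> A2 \<and> (x,z) \<in> D'} ((x, y), z) \<partial>P y \<partial>P x \<partial>\<nu>) = 0"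
proof -
  define E1 :: "((real \<times> real) \<times> real) set" where "E1 = {((x,y),z). (x,z) \<in> D' \<and> y \<notin> A}"
  define E2 :: "((real \<times> real) \<times> real) set" where "E2 = {((x,y),z). x \<in> A1 \<union> A2 \<and> z \<in> A1 \<union> A2 \<and> (x,z) \<in> D'}"
  have "E1 = {v \<in> space ((borel \<Otimes>\<^sub>M borel) \<Otimes>\<^sub>M borel). (fst (fst v), snd v) \<in> D' \<and> snd (fst v) \<notin> A}"
    unfolding E1_def by (auto simp: space_pair_measure)
  also have "\<dots> \<in> sets ((borel \<Otimes>\<^sub>M borel) \<Otimes>\<^sub>M borel)" by measurable
  finally have E1[measurable]: "E1 \<in> sets ((borel \<Otimes>\<^sub>M borel) \<Otimes>\<^sub>M borel)" .
  have slice[measurable]: "Pair x -` D' \<in> sets borel" for x using sets_Pair1[OF D'] by simp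
  have inner1: "(\<integral>\<^sup>+y. \<integral>\<^sup>+z. indicator E1 ((x, y), z) \<partial>P y \<partial>P x)
      = (\<integral>\<^sup>+y. indicator (-A) y * emeasure (P y) (Pair x -` D') \<partial>P x)" for x
  proof (intro nn_integral_cong)
    fix y
    have "(\<integral>\<^sup>+z. indicator E1 ((x, y), z) \<partial>P y) = (\<integral>\<^sup>+z. indicator (-A) y * indicator (Pair x -` D') z \<partial>P y)"
      unfolding E1_def by (intro nn_integral_cong) (auto split: split_indicator)
    also have "\<dots> = indicator (-A) y * emeasure (P y) (Pair x -` D')"
      by (subst nn_integral_cmult) auto
    finally show "(\<integral>\<^sup>+z. indicator E1 ((x, y), z) \<partial>P y) = indicator (-A) y * emeasure (P y) (Pair x -` D')" .
  qed
  have inner2: "(\<integral>\<^sup>+y. \<integral>\<^sup>+z. indicator E2 ((x, y), z) \<partial>P y \<partial>P x)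
      = indicator (A1 \<union> A2) x * (\<integral>\<^sup>+y. emeasure (P y) (Pair x -` D' \<inter> (A1 \<union> A2)) \<partial>P x)" for x
  proof (cases "x \<in> A1 \<union> A2")
    case True
    have "(\<integral>\<^sup>+z. indicator E2 ((x, y), z) \<partial>P y) = (\<integral>\<^sup>+z. indicator (Pair x -` D' \<inter> (A1 \<union> A2)) z \<partial>P y)" for y
      unfolding E2_def using True by (intro nn_integral_cong) (auto split: split_indicator)
    then show ?thesis using True by simp
  next
    case False then show ?thesis unfolding E2_def by simp
  qed
  have "AE x in \<nu>. (\<integral>\<^sup>+y. \<integral>\<^sup>+z. indicator E1 ((x, y), z) \<partial>P y \<partial>P x) = 0"
    using null two_step_measurable[OF E1] unfolding E1_def[symmetric]
    by (subst (asm) nn_integral_0_iff_AE) (auto simp: measurable_cong_sets[OF sets_\<nu> refl])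
  then have "AE x in \<nu>. (\<integral>\<^sup>+y. \<integral>\<^sup>+z. indicator E2 ((x, y), z) \<partial>P y \<partial>P x) = 0"
  proof eventually_elim
    fix x assume "(\<integral>\<^sup>+y. \<integral>\<^sup>+z. indicator E1 ((x, y), z) \<partial>P y \<partial>P x) = 0"
    then show "(\<integral>\<^sup>+y. \<integral>\<^sup>+z. indicator E2 ((x, y), z) \<partial>P y \<partial>P x) = 0"
      unfolding inner1 inner2 using two_step_null_spreads[OF _ slice] by (auto split: split_indicator)
  qed
  then have "(\<integral>\<^sup>+x. \<integral>\<^sup>+y. \<integral>\<^sup>+z. indicator E2 ((x, y), z) \<partial>P y \<partial>P x \<partial>\<nu>) = (\<integral>\<^sup>+x. 0 \<partial>\<nu>)"
    by (rule nn_integral_cong_AE)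
  then show ?thesis by (simp add: E2_def)
qed

text \<open>An event of the two neighbours \<open>Y\<^sub>i\<^sub>-\<^sub>1, Y\<^sub>i\<^sub>+\<^sub>1 \<in> A\<^sub>1 \<union> A\<^sub>2\<close> on which a.s. \<open>Y\<^sub>i \<in> A\<close> is null:
  the middle state can always be moved into \<open>A\<^sub>2 \<subseteq> -A\<close> with positive probability.\<close>
lemma neighbour_event_null:
  assumes D: "D \<in> sets (F {i-1,i+1})"
    and D_T: "\<And>\<omega>. \<omega> \<in> D \<Longrightarrow> Y (i-1) \<omega> \<in> A1 \<union> A2 \<and> Y (i+1) \<omega> \<in> A1 \<union> A2"
    and D_A: "emeasure M {\<omega>\<in>D. Y i \<omega> \<notin> A} = 0"
  shows "emeasure M D = 0"
proof -
  obtain D' where D'[measurable]: "D' \<in> sets (borel \<Otimes>\<^sub>M borel :: (real \<times> real) measure)"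
    and D_eq: "D = (\<lambda>\<omega>. (Y (i-1) \<omega>, Y (i+1) \<omega>)) -` D' \<inter> space M"
    by (rule two_state_event[OF D])
  define E1 :: "((real \<times> real) \<times> real) set" where "E1 = {((x,y),z). (x,z) \<in> D' \<and> y \<notin> A}"
  define E2 :: "((real \<times> real) \<times> real) set" where "E2 = {((x,y),z). x \<in> A1 \<union> A2 \<and> z \<in> A1 \<union> A2 \<and> (x,z) \<in> D'}"
  have "E1 = {v \<in> space ((borel \<Otimes>\<^sub>M borel) \<Otimes>\<^sub>M borel). (fst (fst v), snd v) \<in> D' \<and> snd (fst v) \<notin> A}"
    unfolding E1_def by (auto simp: space_pair_measure)
  also have "\<dots> \<in> sets ((borel \<Otimes>\<^sub>M borel) \<Otimes>\<^sub>M borel)" by measurable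
  finally have E1[measurable]: "E1 \<in> sets ((borel \<Otimes>\<^sub>M borel) \<Otimes>\<^sub>M borel)" .
  have "E2 = {v \<in> space ((borel \<Otimes>\<^sub>M borel) \<Otimes>\<^sub>M borel). fst (fst v) \<in> A1 \<union> A2 \<and> snd v \<in> A1 \<union> A2 \<and> (fst (fst v), snd v) \<in> D'}"
    unfolding E2_def by (auto simp: space_pair_measure)
  also have "\<dots> \<in> sets ((borel \<Otimes>\<^sub>M borel) \<Otimes>\<^sub>M borel)" by measurable
  finally have E2[measurable]: "E2 \<in> sets ((borel \<Otimes>\<^sub>M borel) \<Otimes>\<^sub>M borel)" .
  have "{\<omega>\<in>D. Y i \<omega> \<notin> A} = {\<omega>\<in>space M. ((Y (i-1) \<omega>, Y i \<omega>), Y (i+1) \<omega>) \<in> E1}"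
    unfolding D_eq E1_def by auto
  then have "(\<integral>\<^sup>+x. \<integral>\<^sup>+y. \<integral>\<^sup>+z. indicator E1 ((x, y), z) \<partial>P y \<partial>P x \<partial>distr M borel (Y (i-1))) = 0"
    using D_A triple_law[OF E1, of i] by simp
  then have "(\<integral>\<^sup>+x. \<integral>\<^sup>+y. \<integral>\<^sup>+z. indicator E2 ((x, y), z) \<partial>P y \<partial>P x \<partial>distr M borel (Y (i-1))) = 0"
    unfolding E1_def E2_def by (intro triple_null_spreads[OF D']) auto
  moreover have "D = {\<omega>\<in>space M. ((Y (i-1) \<omega>, Y i \<omega>), Y (i+1) \<omega>) \<in> E2}"
    using D_T unfolding E2_def by (auto simp: D_eq)
  ultimately show ?thesis using triple_law[OF E2, of i] by simp
qed

definition in_A :: "int \<Rightarrow> 'a set" where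
  "in_A i = {\<omega>\<in>space M. Y i \<omega> \<in> A}"

definition neighbours_in_A12 :: "int \<Rightarrow> 'a set" where
  "neighbours_in_A12 i = {\<omega>\<in>space M. Y (i-1) \<omega> \<in> A1 \<union> A2 \<and> Y (i+1) \<omega> \<in> A1 \<union> A2}"

lemma in_A_F: "in_A i \<in> sets (F {i})"
proof -
  have "in_A i = Y i -` A \<inter> space M" unfolding in_A_def by auto
  then show ?thesis using preimage_in_F[of i "{i}" A] by simp
qed

lemma neighbours_in_A12_F: "neighbours_in_A12 i \<in> sets (F {i-1,i+1})"
proof -
  have "neighbours_in_A12 i = (Y (i-1) -` (A1 \<union> A2) \<inter> space M) \<inter> (Y (i+1) -` (A1 \<union> A2) \<inter> space M)"
    unfolding neighbours_in_A12_def by auto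
  also have "\<dots> \<in> sets (F {i-1,i+1})" by (intro sets.Int preimage_in_F) auto
  finally show ?thesis .
qed

lemma in_A_sets[measurable]: "in_A i \<in> sets M"
  and neighbours_in_A12_sets[measurable]: "neighbours_in_A12 i \<in> sets M"
  using in_A_F neighbours_in_A12_F sets_F_subset by blast+

text \<open>If an event \<open>S\<close> avoiding time \<open>i\<close> lies in \<open>{Y\<^sub>i \<in> A}\<close> up to a null set, then its conditional
  probability \<open>\<phi>\<close> given the neighbours is a.s. zero where they lie in \<open>A\<^sub>1 \<union> A\<^sub>2\<close>: the
  neighbour event \<open>{\<phi> > 0}\<close> lies in \<open>{Y\<^sub>i \<in> A}\<close> up to a null set, so \<open>neighbour_event_null\<close>
  applies.\<close>
lemma neighbour_cond_prob_null:
  assumes S: "S \<in> sets (F (-{i}))" and S_A: "measure M (S - in_A i) = 0"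
  shows "emeasure M ({\<omega>\<in>space M. CE {i-1,i+1} (indicator S) \<omega> > 0} \<inter> neighbours_in_A12 i) = 0"
proof -
  let ?B = "in_A i" and ?T = "neighbours_in_A12 i" and ?\<phi> = "CE {i-1,i+1} (indicator S)"
  have "?T - ?B \<in> sets (F {i-1,i,i+1})"
    using neighbours_in_A12_F[of i] in_A_F[of i] sets_F_mono[of "{i-1,i+1}" "{i-1,i,i+1}"]
      sets_F_mono[of "{i}" "{i-1,i,i+1}"] by (intro sets.Diff) auto
  moreover have "measure M ((?T - ?B) \<inter> S) = 0"
  proof -
    have SM: "S \<in> sets M" using S sets_F_subset by blast
    have "measure M ((?T - ?B) \<inter> S) \<le> measure M (S - ?B)"
      by (rule finite_measure_mono[OF _ sets.Diff[OF SM in_A_sets]]) blast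
    then show ?thesis using S_A measure_nonneg[of M "(?T - ?B) \<inter> S"] by linarith
  qed
  ultimately have vanish: "AE \<omega> in M. \<omega> \<in> ?T - ?B \<longrightarrow> ?\<phi> \<omega> = 0"
    by (rule neighbour_cond_prob_vanishes[OF S])
  define D where "D = {\<omega>\<in>space M. ?\<phi> \<omega> > 0} \<inter> ?T"
  have "{\<omega>\<in>space (F {i-1,i+1}). ?\<phi> \<omega> > 0} \<in> sets (F {i-1,i+1})" by measurable
  then have DF: "D \<in> sets (F {i-1,i+1})" unfolding D_def using neighbours_in_A12_F by simp
  then have DM: "D \<in> sets M" using sets_F_subset by blast
  have "AE \<omega> in M. \<omega> \<notin> D - ?B" using vanish by eventually_elim (auto simp: D_def)
  then have "D - ?B \<in> null_sets M" using AE_iff_null_sets[OF sets.Diff[OF DM in_A_sets]] by blast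
  moreover have "{\<omega>\<in>D. Y i \<omega> \<notin> A} = D - ?B" unfolding D_def in_A_def by auto
  ultimately have D_A: "emeasure M {\<omega>\<in>D. Y i \<omega> \<notin> A} = 0" by (simp add: null_setsD1)
  have D_T: "\<And>\<omega>. \<omega> \<in> D \<Longrightarrow> Y (i-1) \<omega> \<in> A1 \<union> A2 \<and> Y (i+1) \<omega> \<in> A1 \<union> A2"
    unfolding D_def neighbours_in_A12_def by auto
  show ?thesis using neighbour_event_null[OF DF D_T D_A] unfolding D_def .
qed

lemma cond_prob_one_avoids_neighbours:
  "measure M ({\<omega>\<in>space M. CE (-{i}) (indicator (in_A i)) \<omega> = 1} \<inter> neighbours_in_A12 i) = 0"
proof -
  interpret S2: sigma_finite_subalgebra M "F {i-1,i+1}" by (rule sigma_finite_F)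
  define S where "S = {\<omega>\<in>space M. CE (-{i}) (indicator (in_A i)) \<omega> = 1}"
  let ?T = "neighbours_in_A12 i" and ?\<phi> = "CE {i-1,i+1} (indicator S)"
  have SF: "S \<in> sets (F (-{i}))" and S_A: "measure M (S - in_A i) = 0"
    using cond_prob_one_null_outside[OF sigma_finite_F in_A_sets] unfolding S_def by auto
  have SM[measurable]: "S \<in> sets M" using SF sets_F_subset by blast
  have \<phi>_int: "integrable M ?\<phi>" by (rule S2.real_cond_exp_int(1)) simp
  define D where "D = {\<omega>\<in>space M. ?\<phi> \<omega> > 0} \<inter> ?T"
  have D_null: "emeasure M D = 0" unfolding D_def by (rule neighbour_cond_prob_null[OF SF S_A])
  have DM[measurable]: "D \<in> sets M" unfolding D_def by measurable
  have "measure M (S \<inter> ?T) = (\<integral>\<omega>. indicator ?T \<omega> * indicator S \<omega> \<partial>M)"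
    by (simp add: indicator_inter_arith[symmetric] Int_commute)
  also have "\<dots> = (\<integral>\<omega>. indicator ?T \<omega> * ?\<phi> \<omega> \<partial>M)"
    using neighbours_in_A12_F
    by (intro S2.real_cond_exp_intg(2)[symmetric]) (auto intro!: integrable_real_mult_indicator)
  also have "\<dots> \<le> (\<integral>\<omega>. indicator D \<omega> * ?\<phi> \<omega> \<partial>M)"
    using integrable_mult_indicator[OF neighbours_in_A12_sets \<phi>_int] integrable_mult_indicator[OF DM \<phi>_int]
    by (intro integral_mono) (auto simp: D_def split: split_indicator)
  also have "\<dots> = 0"
  proof (rule integral_eq_zero_AE)
    have "AE \<omega> in M. \<omega> \<notin> D" using D_null DM by (intro AE_not_in) auto
    then show "AE \<omega> in M. indicator D \<omega> * ?\<phi> \<omega> = 0" by eventually_elim simp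
  qed
  finally show ?thesis using measure_nonneg[of M "S \<inter> ?T"] unfolding S_def by simp
qed

lemma cond_prob_one_bound:
  "measure M {\<omega>\<in>space M. CE (-{i}) (indicator (in_A i)) \<omega> = 1}
    \<le> measure M (in_A i) - measure M (stays_in A1 i)"
proof -
  define S where "S = {\<omega>\<in>space M. CE (-{i}) (indicator (in_A i)) \<omega> = 1}"
  let ?B = "in_A i" and ?T = "neighbours_in_A12 i" and ?W = "stays_in A1 i"
  have "S \<in> sets (F (-{i}))" "measure M (S - ?B) = 0"
    using cond_prob_one_null_outside[OF sigma_finite_F in_A_sets] unfolding S_def by auto
  then have SM: "S \<in> sets M" and S_B: "measure M S = measure M (S \<inter> ?B)"
    using sets_F_subset finite_measure_Diff'[of S ?B] by auto
  have S_T: "measure M (S \<inter> ?T) = 0"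
    using cond_prob_one_avoids_neighbours[of i] unfolding S_def .
  have W_sub: "?W \<subseteq> ?B \<inter> ?T"
    unfolding stays_in_def in_A_def neighbours_in_A12_def using A1_sub by auto
  have "measure M S \<le> measure M ((?B - ?T) \<union> (S \<inter> ?T))"
    unfolding S_B using SM by (intro finite_measure_mono) auto
  also have "\<dots> \<le> measure M (?B - ?T) + measure M (S \<inter> ?T)"
    using SM by (intro measure_subadditive) auto
  also have "\<dots> = measure M ?B - measure M (?B \<inter> ?T)"
    using S_T finite_measure_Diff'[OF in_A_sets neighbours_in_A12_sets] by simp
  also have "\<dots> \<le> measure M ?B - measure M ?W"
    using finite_measure_mono[OF W_sub] by simp
  finally show ?thesis unfolding S_def .
qed

lemma stay_in_A1_positive:
  assumes f0[measurable]: "f0 \<in> borel_measurable borel" and law: "distr M borel (Y (i-1)) = density \<mu> f0"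
    and f0_pos: "\<And>x. x \<in> A1 \<Longrightarrow> f0 x > 0"
  shows "measure M (stays_in A1 i) > 0"
proof -
  define J where "J x = (\<integral>\<^sup>+y. \<integral>\<^sup>+z. indicator ((A1 \<times> A1) \<times> A1) ((x, y), z) \<partial>P y \<partial>P x)" for x
  have J_meas: "J \<in> borel_measurable \<mu>"
    unfolding J_def measurable_cong_sets[OF sets_mu refl] by (rule two_step_measurable) simp
  have J_pos: "J x > 0" if x: "x \<in> A1" for x
  proof -
    have "J x = (\<integral>\<^sup>+y. indicator A1 y * emeasure (P y) A1 \<partial>P x)"
      unfolding J_def using x by (intro nn_integral_cong) (simp add: indicator_times nn_integral_cmult)
    also have "\<dots> > 0"
      using kernel_charges_positive_sets[of _ A1] x mu_A1
      by (intro nn_integral_pos_on_positive_set[where S=A1]) (auto simp: ennreal_zero_less_mult_iff)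
    finally show ?thesis .
  qed
  have "emeasure M (stays_in A1 i) = (\<integral>\<^sup>+x. J x \<partial>density \<mu> f0)"
    using triple_law[of "(A1 \<times> A1) \<times> A1" i] unfolding J_def law stays_in_triple by simp
  also have "\<dots> = (\<integral>\<^sup>+x. f0 x * J x \<partial>\<mu>)"
    using J_meas by (intro nn_integral_density) auto
  also have "\<dots> > 0"
    using J_meas J_pos f0_pos mu_A1
    by (intro nn_integral_pos_on_positive_set[where S=A1]) (auto simp: sets_mu ennreal_zero_less_mult_iff)
  finally show ?thesis by (simp add: emeasure_eq_measure)
qed

end

lemma (in markov_process) sigma_other_times_subset:
  assumes H: "H \<in> borel_measurable borel"
  shows "sets (sigma (space M) ((\<Union>j\<in>-{i}. sets (F {j})) \<union>
           {(\<lambda>\<omega>. H (Y j \<omega>)) -` B \<inter> space M | j B. j \<noteq> i \<and> B \<in> sets borel}))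
         \<subseteq> sets (F (-{i}))"
    (is "sets (sigma _ ?X) \<subseteq> _")
proof -
  have X_F: "?X \<subseteq> sets (F (-{i}))"
  proof
    fix x assume "x \<in> ?X"
    then consider (state) j where "j \<noteq> i" "x \<in> sets (F {j})"
      | (transformed) j B where "j \<noteq> i" "B \<in> sets borel" "x = (\<lambda>\<omega>. H (Y j \<omega>)) -` B \<inter> space M"
      by blast
    then show "x \<in> sets (F (-{i}))"
    proof cases
      case state then show ?thesis using sets_F_mono[of "{j}" "-{i}"] by auto
    next
      case transformed
      then have "x = Y j -` (H -` B) \<inter> space M" by auto
      then show ?thesis using transformed measurable_sets[OF H] by (auto intro!: preimage_in_F)
    qed
  qed
  then have "?X \<subseteq> Pow (space M)" using sets_F_subset sets.sets_into_space by blast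
  then show ?thesis
    using sets.sigma_sets_subset[OF X_F] by simp
qed

lemma (in markov_process) cond_C5_from_uniform_bound:
  assumes H: "H \<in> borel_measurable borel" and d: "0 < d" "d < 1"
    and bound: "\<And>i. measure M {\<omega>\<in>space M. Gcond M (\<lambda>i \<omega>. H (Y i \<omega>)) (\<lambda>j. F (-{j})) i \<xi> \<omega> = 1} \<le> p - d"
  shows "cond_C5 M (\<lambda>i \<omega>. H (Y i \<omega>)) (\<lambda>j. F {j}) (\<lambda>j. F (-{j})) p \<xi>"
  unfolding cond_C5_def using d bound subalgebra_F sigma_other_times_subset[OF H] by blast

text \<open>Stationarity makes the bound of \<open>cond_prob_one_bound\<close> uniform in
  the time index.\<close>
theorem mainTheorem6:
  fixes M :: "'a measure" and Y :: "int \<Rightarrow> 'a \<Rightarrow> real" and H :: "real \<Rightarrow> real"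
    and P :: "real \<Rightarrow> real measure" and \<mu> :: "real measure"
    and f0 :: "real \<Rightarrow> ennreal" and f1 :: "real \<Rightarrow> real \<Rightarrow> ennreal"
    and p \<xi> :: real and A1 A2 :: "real set"
  assumes M: "prob_space M"
    and Y_rv: "\<And>i. Y i \<in> borel_measurable M"
    and stat: "strictly_stationary M Y"
    and markov: "homogeneous_markov M Y P"
    and H: "H \<in> borel_measurable borel"
    and mu: "sigma_finite_measure \<mu>" "sets \<mu> = sets borel"
    and f0: "f0 \<in> borel_measurable borel" "distr M borel (Y 0) = density \<mu> f0"
    and f1: "\<And>x. f1 x \<in> borel_measurable borel" "\<And>x. P x = density \<mu> (f1 x)"
    and p: "0 < p" "p < 1"
    and xi: "\<xi> = Inf {x. measure M {\<omega>\<in>space M. H (Y 1 \<omega>) \<le> x} \<ge> p}"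
    and F_xi: "measure M {\<omega>\<in>space M. H (Y 1 \<omega>) \<le> \<xi>} = p"
    and A1: "A1 \<in> sets borel" "A1 \<subseteq> H -` {..\<xi>}" "emeasure \<mu> A1 > 0"
    and A2: "A2 \<in> sets borel" "A2 \<subseteq> - (H -` {..\<xi>})" "emeasure \<mu> A2 > 0"
    and pos: "\<And>x. x \<in> A1 \<union> A2 \<Longrightarrow> f0 x > 0"
             "\<And>x y. x \<in> A1 \<union> A2 \<Longrightarrow> y \<in> A1 \<union> A2 \<Longrightarrow> f1 x y > 0"
  shows "measure M {\<omega>\<in>space M.
            Gcond M (\<lambda>i \<omega>. H (Y i \<omega>)) (\<lambda>j. gen_sigma M Y (-{j})) 0 \<xi> \<omega> = 1} < p
       \<and> cond_C5 M (\<lambda>i \<omega>. H (Y i \<omega>)) (\<lambda>j. gen_sigma M Y {j}) (\<lambda>j. gen_sigma M Y (-{j})) p \<xi>"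
proof -
  let ?A = "H -` {..\<xi>}"
  have A: "?A \<in> sets borel" using measurable_sets[OF H, of "{..\<xi>}"] by simp
  have "markov_density M Y P \<mu> f1 ?A A1 A2"
    unfolding markov_density_def markov_process_def markov_density_axioms_def markov_process_axioms_def
    using M Y_rv markov mu(2) f1 A1 A2 A pos(2) by blast
  then interpret markov_density M Y P \<mu> f1 ?A A1 A2 .
  have law: "distr M borel (Y j) = density \<mu> f0" for j
    using stationary_marginal[OF Y_rv stat, of j] f0(2) by simp
  have level: "measure M (in_A i) = p" for i
    using measure_preimage_same_law[OF _ Y_rv Y_rv A, of i 1] law F_xi unfolding in_A_def by simp
  define d where "d = measure M (stays_in A1 0)"
  have d_shift: "measure M (stays_in A1 i) = d" for i
    unfolding d_def using measure_stays_in_shift[OF A1(1)] law by simp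
  have d_pos: "0 < d"
    unfolding d_def using stay_in_A1_positive[OF f0(1) law] pos(1) by simp
  have bound: "measure M {\<omega>\<in>space M. Gcond M (\<lambda>i \<omega>. H (Y i \<omega>)) (\<lambda>j. F (-{j})) i \<xi> \<omega> = 1} \<le> p - d" for i
    using cond_prob_one_bound[of i] level[of i] unfolding d_shift Gcond_def in_A_def by simp
  have "0 \<le> p - d" by (rule order_trans[OF measure_nonneg bound])
  then have "d < 1" using p by linarith
  show ?thesis
  proof
    show "measure M {\<omega>\<in>space M. Gcond M (\<lambda>i \<omega>. H (Y i \<omega>)) (\<lambda>j. F (-{j})) 0 \<xi> \<omega> = 1} < p"
      using bound[of 0] d_pos by linarith
  qed (rule cond_C5_from_uniform_bound[OF H d_pos \<open>d < 1\<close> bound])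
qed

end
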